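(* Let $\mathbb{F}$ be a field with $\operatorname{char}\mathbb{F}\neq 2$, let $V$ be a finite-dimensional $\mathbb{F}$-vector space of odd dimension $n$, and let $Q:V\to\mathbb{F}$ be a non-degenerate quadratic form with polarization $b$. Let $G\leq O(V,Q)$ be a finite solvable subgroup that acts irreducibly on $V$. Then there exists an orthogonal decomposition $V=W_1\perp\cdots\perp W_n$ (orthogonal with respect to $b$) such that $\dim W_i=1$ for all $1\leq i\leq n$ and $G$ permutes the set $\{W_1,\ldots,W_n\}$.
   Context: $O(V,Q)=\{g\in\operatorname{GL}(V): Q(gv)=Q(v)\text{ for all }v\in V\}$ is the isometry group of $Q$. "Irreducible" means $V$ has no $G$-invariant subspaces other than $0$ and $V$. *)

theory Defs
  imports "HOL-Analysis.Analysis" "HOL-Algebra.Solvable_Groups"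
begin

text \<open>V is modelled as the coordinate space 'a^'n over a field 'a (every finite-dimensional
vector space of dimension CARD('n) is of this form).\<close>

definition is_quadratic_form :: "('a::field ^ 'n \<Rightarrow> 'a) \<Rightarrow> bool" where
  "is_quadratic_form Q \<longleftrightarrow> (\<exists>c :: 'n \<Rightarrow> 'n \<Rightarrow> 'a. \<forall>v. Q v = (\<Sum>i\<in>UNIV. \<Sum>j\<in>UNIV. c i j * v $ i * v $ j))"

definition polarization :: "('a::field ^ 'n \<Rightarrow> 'a) \<Rightarrow> 'a ^ 'n \<Rightarrow> 'a ^ 'n \<Rightarrow> 'a" where
  "polarization Q u v = Q (u + v) - Q u - Q v"

definition nondegenerate :: "('a::field ^ 'n \<Rightarrow> 'a) \<Rightarrow> bool" where
  "nondegenerate Q \<longleftrightarrow> (\<forall>u. (\<forall>v. polarization Q u v = 0) \<longrightarrow> u = 0)"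

definition GL :: "('a::field ^ 'n \<Rightarrow> 'a ^ 'n) set" where
  "GL = {g. Vector_Spaces.linear (*s) (*s) g \<and> bij g}"

definition orth_set :: "('a::field ^ 'n \<Rightarrow> 'a) \<Rightarrow> ('a ^ 'n \<Rightarrow> 'a ^ 'n) set" where
  "orth_set Q = {g \<in> GL. \<forall>v. Q (g v) = Q v}"

definition orth_group :: "('a::field ^ 'n \<Rightarrow> 'a) \<Rightarrow> ('a ^ 'n \<Rightarrow> 'a ^ 'n) monoid" where
  "orth_group Q = \<lparr>carrier = orth_set Q, monoid.mult = (\<lambda>f g. f \<circ> g), one = id\<rparr>"

definition acts_irreducibly :: "('a::field ^ 'n \<Rightarrow> 'a ^ 'n) set \<Rightarrow> bool" where
  "acts_irreducibly G \<longleftrightarrow>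
     (\<forall>U. vec.subspace U \<and> (\<forall>g\<in>G. g ` U \<subseteq> U) \<longrightarrow> U = {0} \<or> U = UNIV)"

end

theory Submission
  imports Defs
begin

text \<open>
  Consider the orthogonal decompositions of V into nonzero subspaces which G permutes. They are
  finite and G permutes their members transitively, so all members have the same dimension,
  which is odd as it divides n. Take such a decomposition with the largest number of members;
  its members are lines.

  Otherwise the stabilizer H of a member X of dimension > 1 acts irreducibly on X. As H is
  solvable, the last term N of its derived series not acting as \<plusminus>1 on X consists of elements
  which pairwise commute or anticommute on X. No isometry squares to -1 on the nondegenerate
  odd-dimensional space X, as b u (x v) would then be alternating; this yields y \<in> H, not
  \<plusminus>1 on X, commuting on X with all its H-conjugates. The conjugates of y - y\<inverse> (or of y - 1 if
  y is an involution on X) form a commuting family of (anti)self-adjoint operators, and the joint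
  Fitting decomposition of X for this family is a nontrivial H-invariant orthogonal
  decomposition of X. Its G-translates refine the decomposition of V, a contradiction.
\<close>

section \<open>Linear algebra in coordinate spaces\<close>

abbreviation linear_map :: "('a::field ^ 'n \<Rightarrow> 'a ^ 'n) \<Rightarrow> bool" where
  "linear_map f \<equiv> Vector_Spaces.linear (*s) (*s) f"

lemma linear_map_funpow: "linear_map T \<Longrightarrow> linear_map (T ^^ m)"
  by (induction m) (auto intro: Vector_Spaces.linear_compose vec.linear_id simp: id_def[symmetric])

lemma funpow_in_invariant: "T ` C \<subseteq> C \<Longrightarrow> x \<in> C \<Longrightarrow> (T ^^ m) x \<in> C"
  by (induction m) auto

lemma linear_map_image_eq_if_inj:
  assumes f: "linear_map f" and C: "vec.subspace C" and fC: "f ` C \<subseteq> C"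
    and inj: "\<And>x. x \<in> C \<Longrightarrow> f x = 0 \<Longrightarrow> x = 0"
  shows "f ` C = C"
proof -
  have "inj_on f C" using vec.linear_inj_on_iff_eq_0[OF f C] inj by blast
  then have "vec.dim (f ` C) = vec.dim C"
    using vec.dim_image_eq[OF f, of C] C vec.span_eq_iff by metis
  then show ?thesis
    using vec.subspace_dim_equal[OF vec.linear_subspace_image[OF f C] C fC] by simp
qed

lemma funpow_kernel_chain_stops:
  assumes T: "linear_map T" and C: "vec.subspace C"
  obtains j where "j \<le> vec.dim C" "\<And>c. c \<in> C \<Longrightarrow> (T ^^ Suc j) c = 0 \<Longrightarrow> (T ^^ j) c = 0"
proof -
  define ker where "ker j = {c\<in>C. (T ^^ j) c = 0}" for j
  have ker_subspace: "vec.subspace (ker j)" for j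
  proof -
    have "ker j = C \<inter> {c. (T ^^ j) c = 0}" unfolding ker_def by auto
    then show ?thesis
      using vec.subspace_inter C vec.linear_subspace_kernel[OF linear_map_funpow[OF T]] by metis
  qed
  have ker_Suc: "ker j \<subseteq> ker (Suc j)" for j
    unfolding ker_def using vec.linear_0[OF T] by auto
  have "\<exists>j\<le>vec.dim C. ker (Suc j) \<subseteq> ker j"
  proof (rule ccontr)
    assume "\<not> ?thesis"
    then have strict: "j \<le> vec.dim C \<Longrightarrow> ker j \<subset> ker (Suc j)" for j
      using ker_Suc by blast
    have "j \<le> Suc (vec.dim C) \<Longrightarrow> j \<le> vec.dim (ker j)" for j
    proof (induction j)
      case (Suc j)
      then have "ker j \<subset> ker (Suc j)" using strict by simp
      then have "vec.dim (ker j) < vec.dim (ker (Suc j))"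
        using vec.dim_psubset ker_subspace by (metis vec.span_eq_iff)
      then show ?case using Suc by simp
    qed simp
    then have "Suc (vec.dim C) \<le> vec.dim (ker (Suc (vec.dim C)))" by simp
    moreover have "vec.dim (ker (Suc (vec.dim C))) \<le> vec.dim C"
      by (rule vec.dim_subset) (auto simp: ker_def)
    ultimately show False by simp
  qed
  then show ?thesis using that unfolding ker_def by blast
qed

lemma funpow_kernel_stable:
  assumes T: "linear_map T" and C: "vec.subspace C" and TC: "T ` C \<subseteq> C"
    and m: "vec.dim C \<le> m" and c: "c \<in> C" and ck: "(T ^^ (m + k)) c = 0"
  shows "(T ^^ m) c = 0"
proof -
  obtain j where j: "j \<le> vec.dim C"
    and stop: "\<And>c. c \<in> C \<Longrightarrow> (T ^^ Suc j) c = 0 \<Longrightarrow> (T ^^ j) c = 0"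
    using funpow_kernel_chain_stops[OF T C] by blast
  have "(T ^^ j) c = 0" if "c \<in> C" "(T ^^ (j + l)) c = 0" for c l
    using that
  proof (induction l arbitrary: c)
    case (Suc l)
    have "(T ^^ Suc j) ((T ^^ l) c) = 0"
      using Suc.prems(2) by (simp only: add_Suc_right add_Suc[symmetric] funpow_add comp_apply)
    then have "(T ^^ (j + l)) c = 0"
      using stop funpow_in_invariant[OF TC Suc.prems(1)] by (simp add: funpow_add)
    then show ?case using Suc.IH Suc.prems(1) by blast
  qed simp
  then have "(T ^^ j) c = 0" using c ck j m by (metis le_add_diff_inverse le_trans trans_le_add1)
  moreover have "(T ^^ m) c = (T ^^ (m - j)) ((T ^^ j) c)"
    using j m by (metis comp_apply funpow_add le_add_diff_inverse2 le_trans)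
  ultimately show ?thesis using vec.linear_0[OF linear_map_funpow[OF T]] by simp
qed

lemma fitting_kernel_image_inter:
  assumes T: "linear_map T" and C: "vec.subspace C" and TC: "T ` C \<subseteq> C"
    and m: "vec.dim C \<le> m" and "c \<in> C" "(T ^^ m) c = 0" "c \<in> (T ^^ m) ` C"
  shows "c = 0"
proof -
  obtain c' where c': "c' \<in> C" "c = (T ^^ m) c'" using assms(7) by blast
  then have "(T ^^ (m + m)) c' = 0" using assms(6) by (simp add: funpow_add)
  then show ?thesis using funpow_kernel_stable[OF T C TC m c'(1)] c' by simp
qed

lemma fitting_kernel_image_sum:
  assumes T: "linear_map T" and C: "vec.subspace C" and TC: "T ` C \<subseteq> C"
    and m: "vec.dim C \<le> m" and c: "c \<in> C"
  obtains k r where "k \<in> C" "(T ^^ m) k = 0" "r \<in> (T ^^ m) ` C" "c = k + r"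
proof -
  define P where "P = T ^^ m"
  have P: "linear_map P" unfolding P_def using linear_map_funpow[OF T] .
  have PC: "P ` C \<subseteq> C" unfolding P_def using funpow_in_invariant[OF TC] by blast
  define R where "R = P ` C"
  have R: "vec.subspace R" unfolding R_def using vec.linear_subspace_image[OF P C] .
  have "P ` R = R"
  proof (rule linear_map_image_eq_if_inj[OF P R])
    show "P ` R \<subseteq> R" using PC unfolding R_def by blast
    show "x = 0" if "x \<in> R" "P x = 0" for x
      using fitting_kernel_image_inter[OF T C TC m] that PC unfolding R_def P_def by blast
  qed
  then obtain r where r: "r \<in> R" "P c = P r" using c unfolding R_def by blast
  have "c - r \<in> C" using c r PC vec.subspace_diff[OF C] unfolding R_def by blast
  moreover have "P (c - r) = 0" using r vec.linear_diff[OF P] by simp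
  ultimately show ?thesis using that r unfolding P_def R_def by (metis diff_add_cancel)
qed

lemma span_Union_eq_sums:
  assumes "finite E" "\<And>X. X \<in> E \<Longrightarrow> vec.subspace X"
  shows "vec.span (\<Union>E) = {sum f E | f. \<forall>X\<in>E. f X \<in> X}"
  using assms
proof (induction E rule: finite_induct)
  case (insert X E)
  have X: "vec.span X = X" using insert.prems by simp
  have "vec.span (\<Union>(insert X E)) = {x + y |x y. x \<in> X \<and> y \<in> vec.span (\<Union>E)}"
    by (simp only: Union_insert vec.span_Un X)
  also have "\<dots> = {sum f (insert X E) | f. \<forall>Y\<in>insert X E. f Y \<in> Y}"
  proof (intro equalityI subsetI)
    fix v assume "v \<in> {x + y |x y. x \<in> X \<and> y \<in> vec.span (\<Union>E)}"
    then obtain x f where xf: "v = x + sum f E" "x \<in> X" "\<forall>Y\<in>E. f Y \<in> Y"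
      using insert by auto
    have "sum (f(X := x)) E = sum f E" using insert.hyps(2) by (intro sum.cong) auto
    then have "v = sum (f(X := x)) (insert X E)" using xf insert.hyps by simp
    moreover have "\<forall>Y\<in>insert X E. (f(X := x)) Y \<in> Y" using xf by auto
    ultimately show "v \<in> {sum f (insert X E) | f. \<forall>Y\<in>insert X E. f Y \<in> Y}" by blast
  next
    fix v assume "v \<in> {sum f (insert X E) | f. \<forall>Y\<in>insert X E. f Y \<in> Y}"
    then obtain f where f: "v = f X + sum f E" "\<forall>Y\<in>insert X E. f Y \<in> Y"
      using insert.hyps by auto
    moreover have "sum f E \<in> vec.span (\<Union>E)" using insert f by auto
    ultimately show "v \<in> {x + y |x y. x \<in> X \<and> y \<in> vec.span (\<Union>E)}" by auto
  qed
  finally show ?case .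
qed simp

locale bilinear_form =
  fixes a :: "'a::field ^ 'n \<Rightarrow> 'a ^ 'n \<Rightarrow> 'a"
  assumes add_left: "a (u + v) w = a u w + a v w"
    and add_right: "a u (v + w) = a u v + a u w"
    and scale_left: "a (r *s u) v = r * a u v"
    and scale_right: "a u (r *s v) = r * a u v"
begin

lemma zero_right [simp]: "a u 0 = 0"
  using scale_right[of u 0 0] by simp

lemma zero_left [simp]: "a 0 u = 0"
  using scale_left[of 0 0 u] by simp

lemma diff_right: "a u (v - w) = a u v - a u w"
  using add_right[of u "v - w" w] by simp

lemma diff_left: "a (u - v) w = a u w - a v w"
  using add_left[of "u - v" v w] by simp

lemma neg_right: "a u (- v) = - a u v"
  using diff_right[of u 0 v] by simp

lemma sum_right: "a u (sum f S) = (\<Sum>x\<in>S. a u (f x))"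
  by (induction S rule: infinite_finite_induct) (auto simp: add_right)

lemma skew_if_alternating:
  assumes W: "vec.subspace W" and alt: "\<And>x. x \<in> W \<Longrightarrow> a x x = 0"
    and "u \<in> W" "v \<in> W"
  shows "a u v = - a v u"
proof -
  have "a (u + v) (u + v) = 0" "a u u = 0" "a v v = 0" using alt assms vec.subspace_add[OF W] by blast+
  then show ?thesis by (simp add: add_left add_right eq_neg_iff_add_eq_0 add.commute)
qed

lemma hyperbolic_decomposition:
  assumes W: "vec.subspace W" and alt: "\<And>x. x \<in> W \<Longrightarrow> a x x = 0"
    and u: "u \<in> W" and v: "v \<in> W" and uv: "a u v = 1"
  defines "W' \<equiv> {w\<in>W. a u w = 0 \<and> a v w = 0}"
  shows "{x + y |x y. x \<in> vec.span {u, v} \<and> y \<in> W'} = W"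
    and "vec.span {u, v} \<inter> W' = {0}"
    and "vec.dim (vec.span {u, v}) = 2"
proof -
  have skew: "x \<in> W \<Longrightarrow> y \<in> W \<Longrightarrow> a x y = - a y x" for x y
    using skew_if_alternating[OF W alt] by blast
  have vu: "a v u = -1" using skew[OF v u] uv by simp
  have uu: "a u u = 0" and vv: "a v v = 0" using alt u v by auto
  have P: "vec.span {u, v} \<subseteq> W" using u v W by (intro vec.span_minimal) auto
  show "{x + y |x y. x \<in> vec.span {u, v} \<and> y \<in> W'} = W"
  proof (intro equalityI subsetI)
    fix w assume w: "w \<in> W"
    \<comment> \<open>the projection of w to the hyperbolic plane\<close>
    define p where "p = a w v *s u - a w u *s v"
    have p: "p \<in> vec.span {u, v}" unfolding p_def
      by (intro vec.span_diff vec.span_scale vec.span_base) auto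
    have "a u (w - p) = 0" "a v (w - p) = 0"
      unfolding p_def using skew[OF u w] skew[OF v w] uu uv vu vv
      by (simp_all add: diff_right scale_right)
    moreover have "w - p \<in> W" using w p P vec.subspace_diff[OF W] by blast
    ultimately have "w - p \<in> W'" unfolding W'_def by simp
    then show "w \<in> {x + y |x y. x \<in> vec.span {u, v} \<and> y \<in> W'}" using p by force
  qed (use P W vec.subspace_add W'_def in auto)
  show "vec.span {u, v} \<inter> W' = {0}"
  proof (intro equalityI subsetI)
    fix p assume p: "p \<in> vec.span {u, v} \<inter> W'"
    then obtain \<alpha> where "p - \<alpha> *s u \<in> vec.span {v}"
      using vec.span_insert[of u "{v}"] by auto
    then obtain \<beta> where "p - \<alpha> *s u = \<beta> *s v" using vec.span_singleton by auto
    then have pe: "p = \<alpha> *s u + \<beta> *s v" by (metis diff_add_cancel add.commute)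
    have "a u p = \<beta>" "a v p = - \<alpha>" using pe uu uv vu vv by (simp_all add: add_right scale_right)
    then show "p \<in> {0}" using p pe unfolding W'_def by auto
  qed (use W vec.subspace_0 vec.span_zero W'_def in auto)
  have "u \<notin> vec.span {v}"
  proof
    assume "u \<in> vec.span {v}"
    then obtain k where "u = k *s v" using vec.span_singleton by auto
    then show False using uv vv by (simp add: scale_left)
  qed
  moreover have "v \<noteq> 0" using uv by auto
  ultimately show "vec.dim (vec.span {u, v}) = 2" using vec.dim_insert[of u "{v}"] by simp
qed

lemma hyperbolic_split:
  assumes W: "vec.subspace W" and alt: "\<And>x. x \<in> W \<Longrightarrow> a x x = 0"
    and nondeg: "\<And>w. w \<in> W \<Longrightarrow> (\<forall>x\<in>W. a w x = 0) \<Longrightarrow> w = 0"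
    and u: "u \<in> W" and v: "v \<in> W" and uv: "a u v = 1"
  obtains W' where "vec.subspace W'" "W' \<subseteq> W" "vec.dim W = vec.dim W' + 2"
    "\<And>w. w \<in> W' \<Longrightarrow> (\<forall>x\<in>W'. a w x = 0) \<Longrightarrow> w = 0"
proof -
  define W' where "W' = {w\<in>W. a u w = 0 \<and> a v w = 0}"
  have W': "vec.subspace W'"
    using W unfolding W'_def vec.subspace_def by (auto simp: add_right scale_right)
  note decomp = hyperbolic_decomposition[OF W alt u v uv, folded W'_def]
  have "vec.dim W = vec.dim W' + 2"
    using vec.dim_sums_Int[OF vec.subspace_span[of "{u, v}"] W'] decomp by simp
  moreover have "w = 0" if w: "w \<in> W'" and h: "\<forall>x\<in>W'. a w x = 0" for w
  proof -
    have wW: "w \<in> W" using w unfolding W'_def by blast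
    have "a w u = 0" "a w v = 0"
      using w skew_if_alternating[OF W alt wW] u v unfolding W'_def by auto
    then have P: "vec.span {u, v} \<subseteq> {p. a w p = 0}"
      by (intro vec.span_minimal) (auto simp: vec.subspace_def add_right scale_right)
    have "a w x = 0" if "x \<in> W" for x
    proof -
      obtain p y where "x = p + y" "p \<in> vec.span {u, v}" "y \<in> W'" using decomp(1) \<open>x \<in> W\<close> by blast
      then show ?thesis using P h by (auto simp: add_right)
    qed
    then show "w = 0" using nondeg wW by blast
  qed
  ultimately show ?thesis using that W' unfolding W'_def by blast
qed

theorem alternating_even_dim:
  assumes "vec.subspace W" and "\<And>x. x \<in> W \<Longrightarrow> a x x = 0"
    and "\<And>w. w \<in> W \<Longrightarrow> (\<forall>x\<in>W. a w x = 0) \<Longrightarrow> w = 0"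
  shows "even (vec.dim W)"
  using assms
proof (induction "vec.dim W" arbitrary: W rule: less_induct)
  case less
  show ?case
  proof (cases "W \<subseteq> {0}")
    case True
    then have "vec.dim W = 0" by simp
    then show ?thesis by (metis even_zero)
  next
    case False
    then obtain u where u: "u \<in> W" "u \<noteq> 0" by blast
    then obtain v0 where v0: "v0 \<in> W" "a u v0 \<noteq> 0" using less.prems(3) by blast
    define v where "v = inverse (a u v0) *s v0"
    have v: "v \<in> W" unfolding v_def using v0 less.prems(1) vec.subspace_scale by blast
    have uv: "a u v = 1" unfolding v_def using v0 by (simp add: scale_right)
    obtain W' where W': "vec.subspace W'" "W' \<subseteq> W" "vec.dim W = vec.dim W' + 2"
      "\<And>w. w \<in> W' \<Longrightarrow> (\<forall>x\<in>W'. a w x = 0) \<Longrightarrow> w = 0"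
      using hyperbolic_split[OF less.prems u(1) v uv] by blast
    have "vec.dim W' < vec.dim W" using W'(3) by simp
    moreover have "a x x = 0" if "x \<in> W'" for x using less.prems(2) W'(2) that by blast
    ultimately have "even (vec.dim W')" using less.hyps W'(1,4) by blast
    then show ?thesis using W'(3) by simp
  qed
qed

end

lemma (in group) exists_normal_subgroup_commutators_in:
  assumes "solvable G" and "\<one> \<in> Z" and "\<not> carrier G \<subseteq> Z"
  shows "\<exists>N. N \<lhd> G \<and> \<not> N \<subseteq> Z \<and> (\<forall>x\<in>N. \<forall>y\<in>N. x \<otimes> y \<otimes> inv x \<otimes> inv y \<in> Z)"
proof -
  define S where "S j = (derived G ^^ j) (carrier G)" for j
  have S_normal: "S j \<lhd> G" for j
    by (induction j) (simp_all add: S_def normal_self derived_is_normal)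
  obtain n where "S n = {\<one>}" using assms(1) solvable_iff_trivial_derived_seq S_def by auto
  then have ex: "\<exists>j. S j \<subseteq> Z" using assms(2) by (intro exI[of _ n]) simp
  define j where "j = (LEAST j. S j \<subseteq> Z)"
  have Sj: "S j \<subseteq> Z" unfolding j_def by (rule LeastI_ex[OF ex])
  have "j \<noteq> 0" using Sj assms(3) by (auto simp: S_def)
  then obtain i where ji: "j = Suc i" using not0_implies_Suc by blast
  have "\<not> S i \<subseteq> Z" using not_less_Least[of i "\<lambda>j. S j \<subseteq> Z"] ji unfolding j_def by simp
  moreover have "x \<otimes> y \<otimes> inv x \<otimes> inv y \<in> Z" if "x \<in> S i" "y \<in> S i" for x y
  proof -
    have "x \<otimes> y \<otimes> inv x \<otimes> inv y \<in> derived G (S i)"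
      unfolding derived_def using that by (blast intro: generate.incl)
    then show ?thesis using Sj ji S_def by auto
  qed
  ultimately show ?thesis using S_normal by blast
qed

lemma (in group) solvable_restrict:
  assumes H: "subgroup H G" and "solvable G"
  shows "solvable (G\<lparr>carrier := H\<rparr>)"
proof -
  have "group_hom (G\<lparr>carrier := H\<rparr>) G id"
    using subgroup_imp_group[OF H] subgroup.subset[OF H] is_group
    unfolding group_hom_def group_hom_axioms_def hom_def by auto
  moreover have "inj_on id (carrier (G\<lparr>carrier := H\<rparr>))" by simp
  ultimately show ?thesis using group_hom.inj_hom_imp_solvable assms(2) by blast
qed

lemma orth_setD:
  assumes "g \<in> orth_set Q"
  shows "linear_map g" and "bij g" and "Q (g v) = Q v"
  using assms unfolding orth_set_def GL_def by auto

lemma polarization_isometry: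
  assumes "g \<in> orth_set Q" shows "polarization Q (g u) (g v) = polarization Q u v"
  using orth_setD[OF assms] vec.linear_add unfolding polarization_def by metis

lemma group_orth_group: "group (orth_group Q)"
proof (rule groupI)
  fix x assume "x \<in> carrier (orth_group Q)"
  then have x: "x \<in> orth_set Q" unfolding orth_group_def by simp
  have bx: "bij x" using orth_setD(2)[OF x] .
  obtain y where y: "linear_map y" "y \<circ> x = id"
    using vec.linear_injective_left_inverse[OF orth_setD(1)[OF x]] bx unfolding bij_def by blast
  have "x \<circ> y = id"
  proof
    fix v
    obtain w where "v = x w" using bx unfolding bij_def surj_def by blast
    then show "(x \<circ> y) v = id v" using y(2) by (metis comp_apply id_apply)
  qed
  with y have "bij y" "x \<circ> y = id" by (metis o_bij)+
  moreover have "Q (y v) = Q v" for v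
    using orth_setD(3)[OF x, of "y v"] \<open>x \<circ> y = id\<close> by (metis comp_apply id_apply)
  ultimately have "y \<in> carrier (orth_group Q)"
    using y unfolding orth_group_def orth_set_def GL_def by auto
  then show "\<exists>y\<in>carrier (orth_group Q). y \<otimes>\<^bsub>orth_group Q\<^esub> x = \<one>\<^bsub>orth_group Q\<^esub>"
    using y unfolding orth_group_def by auto
next
  fix x y assume "x \<in> carrier (orth_group Q)" "y \<in> carrier (orth_group Q)"
  then show "x \<otimes>\<^bsub>orth_group Q\<^esub> y \<in> carrier (orth_group Q)"
    unfolding orth_group_def orth_set_def GL_def
    by (auto intro: Vector_Spaces.linear_compose bij_comp)
qed (simp_all add: orth_group_def orth_set_def GL_def comp_assoc vec.linear_id)

lemma orth_group_simps:
  "carrier (orth_group Q) = orth_set Q"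
  "f \<otimes>\<^bsub>orth_group Q\<^esub> g = f \<circ> g"
  "\<one>\<^bsub>orth_group Q\<^esub> = id"
  unfolding orth_group_def by simp_all

lemma isometry_linear_ops:
  assumes "g \<in> orth_set Q"
  shows isometry_add: "g (u + v) = g u + g v"
    and isometry_diff: "g (u - v) = g u - g v"
    and isometry_neg: "g (- v) = - g v"
    and isometry_zero: "g 0 = 0"
  using orth_setD(1)[OF assms] vec.linear_add vec.linear_diff vec.linear_neg vec.linear_0 by blast+

lemma isometry_eq_0_iff:
  assumes "g \<in> orth_set Q" shows "g v = 0 \<longleftrightarrow> v = 0"
proof -
  have "inj g" using orth_setD(2)[OF assms] bij_is_inj by blast
  then show ?thesis using isometry_zero[OF assms] by (metis injD)
qed

lemma isometry_image_subspace: "g \<in> orth_set Q \<Longrightarrow> vec.subspace X \<Longrightarrow> vec.subspace (g ` X)"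
  using vec.linear_subspace_image orth_setD(1) by blast

lemma isometry_image_nonzero:
  "g \<in> orth_set Q \<Longrightarrow> vec.subspace X \<Longrightarrow> X \<noteq> {0} \<Longrightarrow> g ` X \<noteq> {0}"
  using isometry_eq_0_iff vec.subspace_0 by blast

lemma isometry_dim_image:
  assumes "g \<in> orth_set Q" shows "vec.dim (g ` X) = vec.dim X"
proof -
  have "inj_on g (vec.span X)"
    using orth_setD(2)[OF assms] by (simp add: bij_def inj_on_def inj_def)
  then show ?thesis using vec.dim_image_eq[OF orth_setD(1)[OF assms]] by blast
qed

section \<open>Quadratic spaces\<close>

lemma polarization_bilinear:
  assumes "is_quadratic_form (Q :: 'a::field ^ 'n \<Rightarrow> 'a)"
  shows "bilinear_form (polarization Q)"
proof -
  obtain c where c: "\<And>v. Q v = (\<Sum>i\<in>UNIV. \<Sum>j\<in>UNIV. c i j * v $ i * v $ j)"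
    using assms unfolding is_quadratic_form_def by blast
  have b: "polarization Q u v = (\<Sum>i\<in>UNIV. \<Sum>j\<in>UNIV. c i j * (u$i * v$j + v$i * u$j))" for u v
    unfolding polarization_def
    by (simp add: c sum_subtractf[symmetric] sum.distrib[symmetric] algebra_simps)
  show ?thesis
  proof
    show "polarization Q (u + v) w = polarization Q u w + polarization Q v w"
      and "polarization Q u (v + w) = polarization Q u v + polarization Q u w" for u v w
      by (simp_all add: b sum.distrib[symmetric] algebra_simps)
    show "polarization Q (r *s u) v = r * polarization Q u v"
      and "polarization Q u (r *s v) = r * polarization Q u v" for r u v
      by (simp_all add: b sum_distrib_left algebra_simps)
  qed
qed

locale quadratic_space =
  fixes Q :: "'a::field ^ 'n \<Rightarrow> 'a"
  assumes quad: "is_quadratic_form Q" and nondeg: "nondegenerate Q" and two_nonzero: "(2::'a) \<noteq> 0"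
begin

abbreviation b where "b \<equiv> polarization Q"

sublocale b: bilinear_form b
  using polarization_bilinear[OF quad] .

lemma b_sym: "b u v = b v u"
  unfolding polarization_def by (simp add: algebra_simps)

lemma b_nondeg: "(\<And>v. b u v = 0) \<Longrightarrow> u = 0"
  using nondeg unfolding nondegenerate_def by blast

definition orthogonal_sets :: "('a ^ 'n) set \<Rightarrow> ('a ^ 'n) set \<Rightarrow> bool" where
  "orthogonal_sets X Y \<longleftrightarrow> (\<forall>u\<in>X. \<forall>v\<in>Y. b u v = 0)"

definition nondegenerate_on :: "('a ^ 'n) set \<Rightarrow> bool" where
  "nondegenerate_on X \<longleftrightarrow> (\<forall>u\<in>X. (\<forall>v\<in>X. b u v = 0) \<longrightarrow> u = 0)"

lemma orthogonal_sets_mono: "orthogonal_sets X Y \<Longrightarrow> A \<subseteq> X \<Longrightarrow> B \<subseteq> Y \<Longrightarrow> orthogonal_sets A B"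
  unfolding orthogonal_sets_def by blast

lemma orthogonal_complement_subspace: "vec.subspace {v. \<forall>u\<in>X. b u v = 0}"
  unfolding vec.subspace_def by (auto simp: b.add_right b.scale_right)

lemma orthogonal_sets_span:
  assumes "orthogonal_sets X Y" shows "orthogonal_sets X (vec.span Y)"
proof -
  have "vec.span Y \<subseteq> {v. \<forall>u\<in>X. b u v = 0}"
    using assms orthogonal_complement_subspace unfolding orthogonal_sets_def
    by (intro vec.span_minimal) auto
  then show ?thesis unfolding orthogonal_sets_def by auto
qed

lemma nondegenerate_on_orthogonal_inter:
  "nondegenerate_on X \<Longrightarrow> orthogonal_sets X Y \<Longrightarrow> v \<in> X \<Longrightarrow> v \<in> Y \<Longrightarrow> v = 0"
  unfolding nondegenerate_on_def orthogonal_sets_def using b_sym by metis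

lemma dim_span_orthogonal:
  assumes "finite E" "\<And>X. X \<in> E \<Longrightarrow> vec.subspace X \<and> nondegenerate_on X"
    "\<And>X Y. X \<in> E \<Longrightarrow> Y \<in> E \<Longrightarrow> X \<noteq> Y \<Longrightarrow> orthogonal_sets X Y"
  shows "vec.dim (vec.span (\<Union>E)) = (\<Sum>X\<in>E. vec.dim X)"
  using assms
proof (induction E rule: finite_induct)
  case (insert X E)
  have X: "vec.subspace X" "nondegenerate_on X" using insert.prems by auto
  define T where "T = vec.span (\<Union>E)"
  have T: "vec.subspace T" unfolding T_def by simp
  have "orthogonal_sets X (\<Union>E)"
    using insert.prems(2) insert.hyps(2) unfolding orthogonal_sets_def by blast
  then have "orthogonal_sets X T" unfolding T_def using orthogonal_sets_span by blast
  then have "X \<inter> T = {0}"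
    using nondegenerate_on_orthogonal_inter[OF X(2)] X(1) T vec.subspace_0 by blast
  moreover have "vec.span (\<Union>(insert X E)) = {x + y |x y. x \<in> X \<and> y \<in> T}"
    unfolding T_def using X(1) by (simp only: Union_insert vec.span_Un vec.span_eq_iff[THEN iffD2])
  ultimately have "vec.dim (vec.span (\<Union>(insert X E))) = vec.dim X + vec.dim T"
    using vec.dim_sums_Int[OF X(1) T] by simp
  also have "vec.dim T = (\<Sum>X\<in>E. vec.dim X)" using insert unfolding T_def by auto
  finally show ?case using insert.hyps by simp
qed simp

lemma orthogonal_sum_unique:
  fixes W :: "'i::finite \<Rightarrow> ('a ^ 'n) set"
  assumes W: "\<And>i. vec.subspace (W i)" "\<And>i. nondegenerate_on (W i)"
    and orth: "\<And>i j. i \<noteq> j \<Longrightarrow> orthogonal_sets (W i) (W j)"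
    and w: "\<And>i. w i \<in> W i" "\<And>i. w' i \<in> W i" and eq: "(\<Sum>i\<in>UNIV. w i) = (\<Sum>i\<in>UNIV. w' i)"
  shows "w = w'"
proof
  fix i
  define z where "z j = w j - w' j" for j
  have z: "z j \<in> W j" for j unfolding z_def using w vec.subspace_diff[OF W(1)] by blast
  have "b u (z i) = 0" if u: "u \<in> W i" for u
  proof -
    have "0 = b u (\<Sum>j\<in>UNIV. z j)" using eq by (simp add: z_def sum_subtractf)
    also have "\<dots> = (\<Sum>j\<in>UNIV. b u (z j))" by (rule b.sum_right)
    also have "\<dots> = b u (z i) + (\<Sum>j\<in>UNIV - {i}. b u (z j))" by (rule sum.remove) auto
    also have "(\<Sum>j\<in>UNIV - {i}. b u (z j)) = 0"
    proof (rule sum.neutral, intro ballI)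
      fix j assume "j \<in> UNIV - {i}"
      then show "b u (z j) = 0" using orth[of i j] u z unfolding orthogonal_sets_def by auto
    qed
    finally show ?thesis by simp
  qed
  then have "z i = 0" using W(2) z b_sym unfolding nondegenerate_on_def by metis
  then show "w i = w' i" unfolding z_def by simp
qed

lemma orthogonal_family_unique_sum:
  fixes W :: "'i::finite \<Rightarrow> ('a ^ 'n) set"
  assumes inj: "inj W" and W: "\<And>i. vec.subspace (W i)" "\<And>i. nondegenerate_on (W i)"
    and orth: "\<And>i j. i \<noteq> j \<Longrightarrow> orthogonal_sets (W i) (W j)"
    and span: "vec.span (\<Union>i. W i) = UNIV"
  shows "\<exists>!w. (\<forall>i. w i \<in> W i) \<and> v = (\<Sum>i\<in>UNIV. w i)"
proof (rule ex_ex1I)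
  have "v \<in> vec.span (\<Union>(range W))" using span by simp
  also have "\<dots> = {sum f (range W) | f. \<forall>X\<in>range W. f X \<in> X}"
    using span_Union_eq_sums[of "range W"] W(1) by auto
  finally obtain f where f: "v = sum f (range W)" "\<forall>X\<in>range W. f X \<in> X" by blast
  moreover have "sum f (range W) = (\<Sum>i\<in>UNIV. f (W i))" using sum.reindex[OF inj] by simp
  ultimately show "\<exists>w. (\<forall>i. w i \<in> W i) \<and> v = (\<Sum>i\<in>UNIV. w i)"
    by (intro exI[of _ "\<lambda>i. f (W i)"]) auto
next
  fix w w'
  assume "(\<forall>i. w i \<in> W i) \<and> v = (\<Sum>i\<in>UNIV. w i)" "(\<forall>i. w' i \<in> W i) \<and> v = (\<Sum>i\<in>UNIV. w' i)"
  then show "w = w'" using orthogonal_sum_unique[of W w w'] W orth by simp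
qed

lemma skew_adjoint_even_dim:
  assumes W: "vec.subspace W" and nd: "nondegenerate_on W" and s: "linear_map s"
    and sW: "s ` W \<subseteq> W" and skew: "\<And>u v. u \<in> W \<Longrightarrow> v \<in> W \<Longrightarrow> b (s u) v = - b u (s v)"
    and inj: "\<And>w. w \<in> W \<Longrightarrow> s w = 0 \<Longrightarrow> w = 0"
  shows "even (vec.dim W)"
proof -
  interpret a: bilinear_form "\<lambda>u v. b u (s v)"
    by unfold_locales
      (simp_all add: b.add_left b.add_right b.scale_left b.scale_right
        vec.linear_add[OF s] vec.linear_scale[OF s])
  have sWW: "s ` W = W" using linear_map_image_eq_if_inj[OF s W sW inj] .
  show ?thesis
  proof (rule a.alternating_even_dim[OF W])
    fix u assume u: "u \<in> W"
    have "b u (s u) = - b u (s u)" using skew[OF u u] b_sym[of "s u" u] by simp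
    then have "2 * b u (s u) = 0" by (simp only: mult_2 eq_neg_iff_add_eq_0)
    then show "b u (s u) = 0" using two_nonzero by simp
  next
    fix u assume u: "u \<in> W" and h: "\<forall>v\<in>W. b u (s v) = 0"
    have "b u w = 0" if "w \<in> W" for w
    proof -
      obtain v where "v \<in> W" "w = s v" using sWW \<open>w \<in> W\<close> by blast
      then show ?thesis using h by blast
    qed
    then show "u = 0" using nd u unfolding nondegenerate_on_def by blast
  qed
qed

interpretation O: group "orth_group Q" by (rule group_orth_group)

definition ginv where "ginv g = inv\<^bsub>orth_group Q\<^esub> g"

lemma ginv_in: "g \<in> orth_set Q \<Longrightarrow> ginv g \<in> orth_set Q"
  using O.inv_closed[of g] by (simp add: ginv_def orth_group_simps)

lemma ginv_right: assumes "g \<in> orth_set Q" shows "g (ginv g v) = v"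
proof -
  have "g \<circ> ginv g = id" using O.r_inv[of g] assms by (simp add: ginv_def orth_group_simps)
  then show ?thesis by (metis comp_apply id_apply)
qed

lemma ginv_left: assumes "g \<in> orth_set Q" shows "ginv g (g v) = v"
proof -
  have "ginv g \<circ> g = id" using O.l_inv[of g] assms by (simp add: ginv_def orth_group_simps)
  then show ?thesis by (metis comp_apply id_apply)
qed

lemma ginv_comp: "g \<in> orth_set Q \<Longrightarrow> h \<in> orth_set Q \<Longrightarrow> ginv (g \<circ> h) = ginv h \<circ> ginv g"
  using O.inv_mult_group[of g h] by (simp add: ginv_def orth_group_simps)

lemma ginv_ginv: "g \<in> orth_set Q \<Longrightarrow> ginv (ginv g) = g"
  using O.inv_inv[of g] by (simp add: ginv_def orth_group_simps)

lemma ginv_id: "ginv id = id"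
  using O.inv_one by (simp add: ginv_def orth_group_simps)

lemma orth_set_comp: "g \<in> orth_set Q \<Longrightarrow> h \<in> orth_set Q \<Longrightarrow> g \<circ> h \<in> orth_set Q"
  using O.m_closed[of g h] by (simp add: orth_group_simps)

lemma b_isometry_adjoint: "g \<in> orth_set Q \<Longrightarrow> b (g u) v = b u (ginv g v)"
  using polarization_isometry[of g Q u "ginv g v"] ginv_right by metis

lemma orthogonal_sets_image:
  "g \<in> orth_set Q \<Longrightarrow> orthogonal_sets X Y \<Longrightarrow> orthogonal_sets (g ` X) (g ` Y)"
  unfolding orthogonal_sets_def by (auto simp: polarization_isometry)

end

section \<open>Invariant orthogonal decompositions\<close>

locale solvable_irreducible_isometry_group = quadratic_space Q for Q :: "'a::field ^ 'n \<Rightarrow> 'a" +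
  fixes G :: "('a ^ 'n \<Rightarrow> 'a ^ 'n) set"
  assumes subgroup_G: "subgroup G (orth_group Q)"
    and finite_G: "finite G"
    and solvable_G: "solvable ((orth_group Q)\<lparr>carrier := G\<rparr>)"
    and irreducible_G: "acts_irreducibly G"
    and odd_dim: "odd CARD('n)"
begin

lemma G_orth_set: "g \<in> G \<Longrightarrow> g \<in> orth_set Q"
  using subgroup.subset[OF subgroup_G] orth_group_simps by blast

lemma G_comp: "g \<in> G \<Longrightarrow> h \<in> G \<Longrightarrow> g \<circ> h \<in> G"
  using subgroup.m_closed[OF subgroup_G] orth_group_simps by metis

lemma G_ginv: "g \<in> G \<Longrightarrow> ginv g \<in> G"
  using subgroup.m_inv_closed[OF subgroup_G] ginv_def by metis

lemma G_id: "id \<in> G"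
  using subgroup.one_closed[OF subgroup_G] orth_group_simps by metis

lemma span_orbit_eq_UNIV:
  assumes U: "vec.subspace U" "U \<noteq> {0}"
  shows "vec.span (\<Union>g\<in>G. g ` U) = UNIV"
proof -
  define S where "S = vec.span (\<Union>g\<in>G. g ` U)"
  have "h ` S \<subseteq> S" if h: "h \<in> G" for h
  proof -
    have "h ` (\<Union>g\<in>G. g ` U) \<subseteq> (\<Union>g\<in>G. g ` U)"
    proof
      fix v assume "v \<in> h ` (\<Union>g\<in>G. g ` U)"
      then obtain g x where "g \<in> G" "x \<in> U" "v = (h \<circ> g) x" by auto
      then show "v \<in> (\<Union>g\<in>G. g ` U)" using G_comp[OF h] by blast
    qed
    then show ?thesis
      unfolding S_def using vec.linear_span_image[OF orth_setD(1)[OF G_orth_set[OF h]]]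
      by (metis vec.span_mono)
  qed
  then have "S = {0} \<or> S = UNIV"
    using irreducible_G unfolding acts_irreducibly_def S_def by simp
  moreover have "U \<subseteq> S" unfolding S_def using G_id vec.span_superset by fastforce
  ultimately have "S = UNIV" using U vec.subspace_0 by blast
  then show ?thesis unfolding S_def .
qed

definition invariant_decomp :: "('a ^ 'n) set set \<Rightarrow> bool" where
  "invariant_decomp D \<longleftrightarrow> (\<forall>X\<in>D. vec.subspace X \<and> X \<noteq> {0})
     \<and> (\<forall>X\<in>D. \<forall>Y\<in>D. X \<noteq> Y \<longrightarrow> orthogonal_sets X Y)
     \<and> vec.span (\<Union>D) = UNIV \<and> (\<forall>g\<in>G. \<forall>X\<in>D. g ` X \<in> D)"

lemma invariant_decompD:
  assumes "invariant_decomp D"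
  shows "X \<in> D \<Longrightarrow> vec.subspace X" and "X \<in> D \<Longrightarrow> X \<noteq> {0}"
    and "X \<in> D \<Longrightarrow> Y \<in> D \<Longrightarrow> X \<noteq> Y \<Longrightarrow> orthogonal_sets X Y"
    and "vec.span (\<Union>D) = UNIV" and "g \<in> G \<Longrightarrow> X \<in> D \<Longrightarrow> g ` X \<in> D"
  using assms unfolding invariant_decomp_def by auto

lemma invariant_decomp_UNIV: "invariant_decomp {UNIV}"
proof -
  have "axis undefined (1::'a) \<noteq> 0" by (simp add: axis_def vec_eq_iff)
  then have "UNIV \<noteq> ({0} :: ('a ^ 'n) set)" by blast
  moreover have "g ` UNIV = UNIV" if "g \<in> G" for g
    using orth_setD(2)[OF G_orth_set[OF that]] by (simp add: bij_def)
  ultimately show ?thesis unfolding invariant_decomp_def by auto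
qed

lemma invariant_decomp_nondegenerate:
  assumes D: "invariant_decomp D" and X: "X \<in> D" shows "nondegenerate_on X"
  unfolding nondegenerate_on_def
proof (intro ballI impI)
  fix u assume u: "u \<in> X" and h: "\<forall>v\<in>X. b u v = 0"
  have "orthogonal_sets {u} (\<Union>D)"
    using invariant_decompD(3)[OF D X] u h unfolding orthogonal_sets_def by blast
  then have "orthogonal_sets {u} UNIV"
    using orthogonal_sets_span invariant_decompD(4)[OF D] by metis
  then show "u = 0" using b_nondeg unfolding orthogonal_sets_def by blast
qed

lemma invariant_decomp_finite:
  assumes D: "invariant_decomp D" shows "finite D" and "card D \<le> CARD('n)"
proof -
  have card_le: "card E \<le> CARD('n)" if E: "E \<subseteq> D" "finite E" for E
  proof -
    have "card E = (\<Sum>X\<in>E. 1)" by simp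
    also have "\<dots> \<le> (\<Sum>X\<in>E. vec.dim X)"
    proof (rule sum_mono)
      fix X assume "X \<in> E"
      then have "X \<noteq> {0}" "vec.subspace X" using invariant_decompD(1,2)[OF D] E by auto
      then show "1 \<le> vec.dim X" using vec.dim_eq_0 vec.subspace_0 by fastforce
    qed
    also have "\<dots> = vec.dim (vec.span (\<Union>E))"
      using E invariant_decompD(1,3)[OF D] invariant_decomp_nondegenerate[OF D]
      by (intro dim_span_orthogonal[symmetric]) blast+
    also have "\<dots> \<le> CARD('n)" using vec.dim_subset[of _ UNIV] vec_dim_card[where 'a='a and 'n='n] by (metis subset_UNIV)
    finally show ?thesis .
  qed
  show "finite D"
  proof (rule ccontr)
    assume "infinite D"
    then obtain E where E: "E \<subseteq> D" "finite E" "card E = Suc CARD('n)"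
      using infinite_arbitrarily_large by blast
    then show False using card_le[OF E(1,2)] by simp
  qed
  then show "card D \<le> CARD('n)" using card_le by simp
qed

text \<open>The span of the G-orbit of X is all of V by irreducibility, while a member outside the orbit
  would be orthogonal to it.\<close>

lemma invariant_decomp_transitive:
  assumes D: "invariant_decomp D" and X: "X \<in> D" and Y: "Y \<in> D" shows "\<exists>g\<in>G. g ` X = Y"
proof (rule ccontr)
  assume "\<not> ?thesis"
  then have "orthogonal_sets Y (\<Union>g\<in>G. g ` X)"
    using invariant_decompD(3,5)[OF D] X Y unfolding orthogonal_sets_def by blast
  then have "orthogonal_sets Y UNIV"
    using orthogonal_sets_span span_orbit_eq_UNIV invariant_decompD(1,2)[OF D X] by metis
  then have "Y \<subseteq> {0}" using b_nondeg unfolding orthogonal_sets_def by blast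
  then show False using invariant_decompD(1,2)[OF D Y] vec.subspace_0 by blast
qed

lemma CARD_eq_sum_dim:
  assumes D: "invariant_decomp D" shows "CARD('n) = (\<Sum>X\<in>D. vec.dim X)"
proof -
  have "CARD('n) = vec.dim (vec.span (\<Union>D))"
    using invariant_decompD(4)[OF D] vec_dim_card[where 'a='a and 'n='n] by simp
  also have "\<dots> = (\<Sum>X\<in>D. vec.dim X)"
    using invariant_decomp_finite(1)[OF D] invariant_decompD(1,3)[OF D]
      invariant_decomp_nondegenerate[OF D]
    by (intro dim_span_orthogonal) blast+
  finally show ?thesis .
qed

lemma invariant_decomp_card_dim:
  assumes D: "invariant_decomp D" and X: "X \<in> D" shows "CARD('n) = card D * vec.dim X"
proof -
  have "vec.dim Y = vec.dim X" if "Y \<in> D" for Y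
    using invariant_decomp_transitive[OF D X that] isometry_dim_image G_orth_set by blast
  then show ?thesis using CARD_eq_sum_dim[OF D] by simp
qed

lemma invariant_decomp_odd_dim:
  "invariant_decomp D \<Longrightarrow> X \<in> D \<Longrightarrow> odd (vec.dim X)"
  using invariant_decomp_card_dim odd_dim by fastforce

lemma invariant_decomp_eq_if_common_subspace:
  assumes D: "invariant_decomp D" and Y: "Y \<in> D" "Y' \<in> D"
    and Z: "Z \<subseteq> Y" "Z \<subseteq> Y'" "vec.subspace Z" "Z \<noteq> {0}"
  shows "Y = Y'"
proof (rule ccontr)
  assume "Y \<noteq> Y'"
  then have "orthogonal_sets Y Y'" using invariant_decompD(3)[OF D Y] by blast
  moreover obtain v where "v \<in> Z" "v \<noteq> 0" using Z(3,4) vec.subspace_0 by blast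
  ultimately show False
    using nondegenerate_on_orthogonal_inter[OF invariant_decomp_nondegenerate[OF D Y(1)]] Z(1,2) by blast
qed

lemma card_invariant_decomp_lines:
  assumes D: "invariant_decomp D" and lines: "\<And>X. X \<in> D \<Longrightarrow> vec.dim X = 1"
  shows "card D = CARD('n)"
  using CARD_eq_sum_dim[OF D] lines by simp

end

section \<open>Irreducible blocks\<close>

context quadratic_space
begin

definition conjug :: "('a ^ 'n \<Rightarrow> 'a ^ 'n) \<Rightarrow> ('a ^ 'n \<Rightarrow> 'a ^ 'n) \<Rightarrow> 'a ^ 'n \<Rightarrow> 'a ^ 'n" where
  "conjug h f = h \<circ> f \<circ> ginv h"

lemma conjug_conjug: "g \<in> orth_set Q \<Longrightarrow> h \<in> orth_set Q \<Longrightarrow> conjug g (conjug h f) = conjug (g \<circ> h) f"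
  unfolding conjug_def using ginv_comp by (simp add: comp_assoc)

lemma conjug_id: "conjug id f = f"
  unfolding conjug_def ginv_id by simp

lemma conjug_ginv_conjug: assumes "h \<in> orth_set Q" shows "conjug (ginv h) (conjug h f) = f"
proof -
  have "ginv h \<circ> h = id" using ginv_left[OF assms] by (simp add: fun_eq_iff)
  then show ?thesis using conjug_conjug[OF ginv_in[OF assms] assms] conjug_id by metis
qed

lemma conjug_funpow: "h \<in> orth_set Q \<Longrightarrow> (conjug h f ^^ m) v = h ((f ^^ m) (ginv h v))"
  by (induction m arbitrary: v) (auto simp: conjug_def ginv_right ginv_left)

lemma ginv_conjug:
  assumes g: "g \<in> orth_set Q" and h: "h \<in> orth_set Q"
  shows "ginv (conjug h g) = conjug h (ginv g)"
proof -
  have "ginv (conjug h g) = ginv (h \<circ> (g \<circ> ginv h))" unfolding conjug_def by (simp add: comp_assoc)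
  also have "\<dots> = ginv (g \<circ> ginv h) \<circ> ginv h"
    using ginv_comp[OF h orth_set_comp[OF g ginv_in[OF h]]] .
  also have "\<dots> = conjug h (ginv g)"
    unfolding conjug_def using ginv_comp[OF g ginv_in[OF h]] ginv_ginv[OF h] by (simp add: comp_assoc)
  finally show ?thesis .
qed

lemma linear_map_conjug: "h \<in> orth_set Q \<Longrightarrow> linear_map f \<Longrightarrow> linear_map (conjug h f)"
  unfolding conjug_def using orth_setD(1) ginv_in by (metis Vector_Spaces.linear_compose)

definition orth_imprimitivity_system ::
    "('a ^ 'n) set \<Rightarrow> ('a ^ 'n \<Rightarrow> 'a ^ 'n) set \<Rightarrow> ('a ^ 'n) set set \<Rightarrow> bool" where
  "orth_imprimitivity_system W H DD \<longleftrightarrow> (\<forall>A\<in>DD. vec.subspace A \<and> A \<noteq> {0} \<and> A \<subseteq> W)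
      \<and> (\<forall>A\<in>DD. \<forall>B\<in>DD. A \<noteq> B \<longrightarrow> orthogonal_sets A B) \<and> vec.span (\<Union>DD) = W
      \<and> (\<forall>h\<in>H. \<forall>A\<in>DD. h ` A \<in> DD) \<and> (\<exists>A\<in>DD. \<exists>B\<in>DD. A \<noteq> B)"

lemma orth_imprimitivity_systemD:
  assumes "orth_imprimitivity_system W H DD"
  shows "A \<in> DD \<Longrightarrow> vec.subspace A" and "A \<in> DD \<Longrightarrow> A \<noteq> {0}" and "A \<in> DD \<Longrightarrow> A \<subseteq> W"
    and "A \<in> DD \<Longrightarrow> B \<in> DD \<Longrightarrow> A \<noteq> B \<Longrightarrow> orthogonal_sets A B"
    and "vec.span (\<Union>DD) = W" and "h \<in> H \<Longrightarrow> A \<in> DD \<Longrightarrow> h ` A \<in> DD"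
    and "\<exists>A\<in>DD. \<exists>B\<in>DD. A \<noteq> B"
  using assms unfolding orth_imprimitivity_system_def by blast+

end

locale irreducible_block = solvable_irreducible_isometry_group Q G
  for Q :: "'a::field ^ 'n \<Rightarrow> 'a" and G +
  fixes W :: "('a ^ 'n) set" and H :: "('a ^ 'n \<Rightarrow> 'a ^ 'n) set"
  assumes subspace_W: "vec.subspace W" and nondegenerate_W: "nondegenerate_on W"
    and odd_dim_W: "odd (vec.dim W)" and dim_W_not_1: "vec.dim W \<noteq> 1"
    and subgroup_H: "subgroup H (orth_group Q)" and H_subset: "H \<subseteq> G"
    and H_stabilizes: "\<forall>h\<in>H. h ` W = W"
    and irreducible_H: "\<And>U. vec.subspace U \<Longrightarrow> U \<subseteq> W \<Longrightarrow> (\<forall>h\<in>H. h ` U \<subseteq> U) \<Longrightarrow> U = {0} \<or> U = W"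
begin

abbreviation d where "d \<equiv> vec.dim W"

lemma H_orth_set: "h \<in> H \<Longrightarrow> h \<in> orth_set Q"
  using H_subset G_orth_set by blast

lemma H_ginv: "h \<in> H \<Longrightarrow> ginv h \<in> H"
  using subgroup.m_inv_closed[OF subgroup_H] ginv_def by metis

lemma H_comp: "g \<in> H \<Longrightarrow> h \<in> H \<Longrightarrow> g \<circ> h \<in> H"
  using subgroup.m_closed[OF subgroup_H] orth_group_simps by metis

lemma H_id: "id \<in> H"
  using subgroup.one_closed[OF subgroup_H] orth_group_simps by metis

lemma H_W: "h \<in> H \<Longrightarrow> w \<in> W \<Longrightarrow> h w \<in> W"
  using H_stabilizes by blast

lemma conjug_in_H: "h \<in> H \<Longrightarrow> y \<in> H \<Longrightarrow> conjug h y \<in> H"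
  unfolding conjug_def using H_comp H_ginv by blast

lemma conjug_W: "h \<in> H \<Longrightarrow> f ` W \<subseteq> W \<Longrightarrow> w \<in> W \<Longrightarrow> conjug h f w \<in> W"
  unfolding conjug_def comp_apply by (metis H_W H_ginv image_subset_iff)

lemma zero_in_W: "0 \<in> W"
  using subspace_W vec.subspace_0 by blast

lemma dim_W_pos: "d \<ge> 1"
  using odd_dim_W by (cases d) auto

lemma W_nonzero: "W \<noteq> {0}"
  using dim_W_pos by auto

lemma ginv_commute_on_W:
  assumes p: "p \<in> H" and q: "q \<in> H" and c: "\<forall>w\<in>W. p (q w) = q (p w)"
  shows "\<forall>w\<in>W. ginv p (q w) = q (ginv p w)"
proof
  fix w assume w: "w \<in> W"
  have p': "p \<in> orth_set Q" using H_orth_set p by blast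
  have "ginv p w \<in> W" using H_W H_ginv p w by blast
  then have "p (q (ginv p w)) = q w" using c ginv_right[OF p'] by metis
  then show "ginv p (q w) = q (ginv p w)" using ginv_left[OF p'] by metis
qed

lemma conjugates_commute:
  assumes fW: "f ` W \<subseteq> W"
    and base: "\<And>h w. h \<in> H \<Longrightarrow> w \<in> W \<Longrightarrow> f (conjug h f w) = conjug h f (f w)"
    and h1: "h1 \<in> H" and h2: "h2 \<in> H" and w: "w \<in> W"
  shows "conjug h1 f (conjug h2 f w) = conjug h2 f (conjug h1 f w)"
proof -
  define k where "k = ginv h1 \<circ> h2"
  have k: "k \<in> H" unfolding k_def using H_comp H_ginv h1 h2 by blast
  have o1: "h1 \<in> orth_set Q" and o2: "h2 \<in> orth_set Q" using h1 h2 H_orth_set by auto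
  have h2_eq: "conjug h2 f = conjug h1 (conjug k f)"
    unfolding k_def using conjug_conjug[OF o1 orth_set_comp[OF ginv_in[OF o1] o2]]
    by (metis comp_assoc conjug_conjug conjug_ginv_conjug ginv_in o1 o2 ginv_ginv)
  define w' where "w' = ginv h1 w"
  have w': "w' \<in> W" unfolding w'_def using H_W H_ginv h1 w by blast
  have "conjug h1 f (conjug h2 f w) = h1 (f (conjug k f w'))"
    unfolding h2_eq by (simp add: conjug_def w'_def ginv_left[OF o1])
  also have "\<dots> = h1 (conjug k f (f w'))" using base k w' by simp
  also have "\<dots> = conjug h2 f (conjug h1 f w)"
    unfolding h2_eq by (simp add: conjug_def w'_def ginv_left[OF o1])
  finally show ?thesis .
qed

end

text \<open>The case e = -1 covers y - y\<inverse>, the case e = 1 covers y - 1 for an involution y.\<close>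

locale commuting_conjugates = irreducible_block Q G W H
  for Q :: "'a::field ^ 'n \<Rightarrow> 'a" and G W H +
  fixes T0 :: "'a ^ 'n \<Rightarrow> 'a ^ 'n" and e :: 'a
  assumes linear_T0: "linear_map T0" and T0_W: "T0 ` W \<subseteq> W" and e_square: "e * e = 1"
    and T0_adjoint: "\<And>u v. u \<in> W \<Longrightarrow> v \<in> W \<Longrightarrow> b (T0 u) v = e * b u (T0 v)"
    and T0_commutes: "\<And>h w. h \<in> H \<Longrightarrow> w \<in> W \<Longrightarrow> T0 (conjug h T0 w) = conjug h T0 (T0 w)"
begin

definition conjugates where "conjugates = (\<lambda>h. conjug h T0) ` H"

lemma T0_conjugates: "T0 \<in> conjugates"
  unfolding conjugates_def using H_id conjug_id[of T0] by (metis image_eqI)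

lemma finite_conjugates: "finite conjugates"
  unfolding conjugates_def using finite_subset[OF H_subset finite_G] by simp

lemma conjugates_linear: "T \<in> conjugates \<Longrightarrow> linear_map T"
  unfolding conjugates_def using linear_map_conjug[OF H_orth_set linear_T0] by blast

lemma conjugates_zero: "T \<in> conjugates \<Longrightarrow> T 0 = 0"
  using vec.linear_0[OF conjugates_linear] by blast

lemma conjugates_W: "T \<in> conjugates \<Longrightarrow> w \<in> W \<Longrightarrow> T w \<in> W"
  unfolding conjugates_def using conjug_W[OF _ T0_W] by blast

lemma conjugates_funpow_W: "T \<in> conjugates \<Longrightarrow> w \<in> W \<Longrightarrow> (T ^^ m) w \<in> W"
  by (induction m) (auto simp: conjugates_W)

lemma conjugates_commute_on_W:
  assumes "T \<in> conjugates" "T' \<in> conjugates" "w \<in> W" shows "T (T' w) = T' (T w)"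
  using assms conjugates_commute[OF T0_W T0_commutes] unfolding conjugates_def by blast

lemma conjugates_funpow_commute:
  "T \<in> conjugates \<Longrightarrow> T' \<in> conjugates \<Longrightarrow> w \<in> W \<Longrightarrow> T' ((T ^^ m) w) = (T ^^ m) (T' w)"
  by (induction m) (auto simp: conjugates_commute_on_W conjugates_funpow_W)

lemma conjugates_adjoint:
  assumes T: "T \<in> conjugates" and u: "u \<in> W" and v: "v \<in> W"
  shows "b u (T v) = e * b (T u) v"
proof -
  obtain h where h: "h \<in> H" "T = conjug h T0" using T unfolding conjugates_def by blast
  have o: "h \<in> orth_set Q" using H_orth_set h by blast
  have u': "ginv h u \<in> W" and v': "ginv h v \<in> W" using H_W H_ginv h u v by auto
  have "b (T u) v = b (T0 (ginv h u)) (ginv h v)"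
    unfolding h conjug_def using b_isometry_adjoint[OF o] by simp
  also have "\<dots> = e * b (ginv h u) (T0 (ginv h v))" using T0_adjoint u' v' by blast
  also have "\<dots> = e * b (h (ginv h u)) (h (T0 (ginv h v)))" using polarization_isometry[OF o] by simp
  also have "\<dots> = e * b u (T v)" unfolding h conjug_def using ginv_right[OF o] by simp
  finally show ?thesis using e_square by (simp add: mult.assoc[symmetric])
qed

lemma conjugates_funpow_adjoint:
  "T \<in> conjugates \<Longrightarrow> u \<in> W \<Longrightarrow> v \<in> W \<Longrightarrow> b u ((T ^^ m) v) = e ^ m * b ((T ^^ m) u) v"
proof (induction m arbitrary: u)
  case (Suc m)
  have "b u ((T ^^ Suc m) v) = e * b (T u) ((T ^^ m) v)"
    using conjugates_adjoint Suc.prems conjugates_funpow_W by simp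
  also have "\<dots> = e * (e ^ m * b ((T ^^ m) (T u)) v)" using Suc conjugates_W by simp
  finally show ?case by (simp add: funpow_Suc_right del: funpow.simps)
qed simp

lemma conjugates_conjug: assumes h: "h \<in> H" and T: "T \<in> conjugates" shows "conjug h T \<in> conjugates"
proof -
  obtain h' where h': "h' \<in> H" "T = conjug h' T0" using T unfolding conjugates_def by blast
  then have "conjug h T = conjug (h \<circ> h') T0"
    using conjug_conjug[OF H_orth_set[OF h] H_orth_set[OF h'(1)]] by simp
  then show ?thesis unfolding conjugates_def using H_comp h h' by blast
qed

lemma conjugates_split:
  assumes "h \<in> H" "T \<in> conjugates"
  shows "T = conjug h (conjug (ginv h) T)" and "conjug (ginv h) T \<in> conjugates"
  using conjug_ginv_conjug[OF ginv_in] ginv_ginv H_orth_set assms conjugates_conjug H_ginv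
  by metis+

definition common_kernel where
  "common_kernel S = {w\<in>W. \<forall>T\<in>S. T w = 0}"

lemma common_kernel_subspace:
  assumes S: "S \<subseteq> conjugates" shows "vec.subspace (common_kernel S)"
proof -
  have L: "T (x + y) = T x + T y" "T (c *s x) = c *s T x" if "T \<in> S" for T x y c
    using vec.linear_add vec.linear_scale conjugates_linear S that by blast+
  show ?thesis unfolding vec.subspace_def common_kernel_def
    using zero_in_W vec.subspace_add[OF subspace_W] vec.subspace_scale[OF subspace_W]
      conjugates_zero S by (auto simp: L)
qed

lemma common_kernel_invariant:
  assumes S: "S \<subseteq> conjugates" and T: "T \<in> conjugates"
  shows "T ` common_kernel S \<subseteq> common_kernel S"
proof
  fix v assume "v \<in> T ` common_kernel S"
  then obtain w where w: "w \<in> common_kernel S" "v = T w" by blast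
  have "T' (T w) = 0" if T': "T' \<in> S" for T'
  proof -
    have "T' \<in> conjugates" "w \<in> W" "T' w = 0"
      using S T' w(1) unfolding common_kernel_def by auto
    then show ?thesis using conjugates_commute_on_W[OF _ T] conjugates_zero[OF T] by metis
  qed
  then show "v \<in> common_kernel S" using w conjugates_W[OF T] unfolding common_kernel_def by auto
qed

lemma exists_kernel_vector:
  assumes T: "T \<in> conjugates" and C: "T ` C \<subseteq> C"
  shows "c \<in> C \<Longrightarrow> c \<noteq> 0 \<Longrightarrow> (T ^^ m) c = 0 \<Longrightarrow> \<exists>c'\<in>C. c' \<noteq> 0 \<and> T c' = 0"
proof (induction m arbitrary: c)
  case (Suc m)
  then show ?case
    using C by (cases "T c = 0") (auto simp: funpow_Suc_right simp del: funpow.simps)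
qed simp

lemma common_kernel_nonzero:
  assumes nil: "\<And>T w. T \<in> conjugates \<Longrightarrow> w \<in> W \<Longrightarrow> (T ^^ d) w = 0"
  shows "S \<subseteq> conjugates \<Longrightarrow> common_kernel S \<noteq> {0}"
proof (induction S rule: infinite_finite_induct)
  case (infinite S)
  then show ?case using finite_subset[OF _ finite_conjugates] by blast
next
  case empty
  then show ?case unfolding common_kernel_def using W_nonzero by simp
next
  case (insert T S)
  then have S: "S \<subseteq> conjugates" and T: "T \<in> conjugates" by auto
  obtain c where c: "c \<in> common_kernel S" "c \<noteq> 0"
    using insert S vec.subspace_0[OF common_kernel_subspace[OF S]] by blast
  have "(T ^^ d) c = 0" using nil T c unfolding common_kernel_def by blast
  then obtain c' where "c' \<in> common_kernel S" "c' \<noteq> 0" "T c' = 0"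
    using exists_kernel_vector[OF T common_kernel_invariant[OF S T]] c by blast
  then show ?case unfolding common_kernel_def by auto
qed

lemma common_kernel_conjugates_H_invariant:
  assumes h: "h \<in> H" shows "h ` common_kernel conjugates \<subseteq> common_kernel conjugates"
proof
  fix v assume "v \<in> h ` common_kernel conjugates"
  then obtain w where w: "w \<in> common_kernel conjugates" "v = h w" by blast
  have o: "h \<in> orth_set Q" using H_orth_set h by blast
  have "T (h w) = 0" if "T \<in> conjugates" for T
  proof -
    have "T (h w) = h (conjug (ginv h) T w)"
      using conjugates_split(1)[OF h that] ginv_left[OF o] unfolding conjug_def by (metis comp_apply)
    then show ?thesis
      using w(1) conjugates_split(2)[OF h that] isometry_zero[OF o]
      unfolding common_kernel_def by auto
  qed
  then show "v \<in> common_kernel conjugates" using w H_W[OF h] unfolding common_kernel_def by auto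
qed

lemma zero_if_nilpotent:
  assumes nil: "\<And>w. w \<in> W \<Longrightarrow> (T0 ^^ d) w = 0" and w: "w \<in> W"
  shows "T0 w = 0"
proof -
  have nil_conj: "(T ^^ d) w = 0" if T: "T \<in> conjugates" and w: "w \<in> W" for T w
  proof -
    obtain h where h: "h \<in> H" "T = conjug h T0" using T unfolding conjugates_def by blast
    have o: "h \<in> orth_set Q" using H_orth_set h by blast
    show ?thesis
      using conjug_funpow[OF o] nil H_W H_ginv h w isometry_zero[OF o] by simp
  qed
  have "common_kernel conjugates \<subseteq> W" unfolding common_kernel_def by blast
  then have "common_kernel conjugates = {0} \<or> common_kernel conjugates = W"
    using irreducible_H[OF common_kernel_subspace[OF order_refl]]
      common_kernel_conjugates_H_invariant by blast
  then have "common_kernel conjugates = W"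
    using common_kernel_nonzero[OF nil_conj order_refl] by blast
  then show ?thesis using T0_conjugates w unfolding common_kernel_def by blast
qed

definition fitting_range :: "('a ^ 'n \<Rightarrow> 'a ^ 'n) \<Rightarrow> ('a ^ 'n) set" where
  "fitting_range T = (T ^^ d) ` W"

definition joint_fitting ::
    "('a ^ 'n \<Rightarrow> 'a ^ 'n) set \<Rightarrow> (('a ^ 'n \<Rightarrow> 'a ^ 'n) \<Rightarrow> bool) \<Rightarrow> ('a ^ 'n) set" where
  "joint_fitting S \<sigma> = {w\<in>W. \<forall>T\<in>S. if \<sigma> T then (T ^^ d) w = 0 else w \<in> fitting_range T}"

lemma fitting_range_subspace: "T \<in> conjugates \<Longrightarrow> vec.subspace (fitting_range T)"
  unfolding fitting_range_def
  using vec.linear_subspace_image[OF linear_map_funpow[OF conjugates_linear] subspace_W] by blast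

lemma fitting_range_invariant:
  assumes T: "T \<in> conjugates" and T': "T' \<in> conjugates" and v: "v \<in> fitting_range T"
  shows "T' v \<in> fitting_range T"
proof -
  obtain u where "u \<in> W" "v = (T ^^ d) u" using v unfolding fitting_range_def by blast
  then show ?thesis
    using conjugates_funpow_commute[OF T T'] conjugates_W[OF T'] unfolding fitting_range_def by auto
qed

lemma fitting_null_range_inter:
  assumes T: "T \<in> conjugates" and "c \<in> W" "(T ^^ d) c = 0" "c \<in> fitting_range T"
  shows "c = 0"
proof -
  have "T ` W \<subseteq> W" using conjugates_W[OF T] by blast
  then show ?thesis
    using fitting_kernel_image_inter[OF conjugates_linear[OF T] subspace_W _ order_refl] assms(2-4)
    unfolding fitting_range_def by blast
qed

lemma joint_fitting_W: "joint_fitting S \<sigma> \<subseteq> W"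
  unfolding joint_fitting_def by auto

lemma joint_fitting_subspace:
  assumes S: "S \<subseteq> conjugates" shows "vec.subspace (joint_fitting S \<sigma>)"
proof -
  have L: "(T ^^ d) (x + y) = (T ^^ d) x + (T ^^ d) y" "(T ^^ d) (c *s x) = c *s (T ^^ d) x"
    "(T ^^ d) 0 = 0" if "T \<in> S" for T x y c
    using linear_map_funpow[OF conjugates_linear] S that
      vec.linear_add vec.linear_scale vec.linear_0 by blast+
  have R: "0 \<in> fitting_range T" "x \<in> fitting_range T \<Longrightarrow> y \<in> fitting_range T \<Longrightarrow> x + y \<in> fitting_range T"
    "x \<in> fitting_range T \<Longrightarrow> c *s x \<in> fitting_range T" if "T \<in> S" for T x y c
    using fitting_range_subspace S that vec.subspace_0 vec.subspace_add vec.subspace_scale by blast+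
  show ?thesis unfolding vec.subspace_def joint_fitting_def
    using zero_in_W vec.subspace_add[OF subspace_W] vec.subspace_scale[OF subspace_W]
    by (auto simp: L R)
qed

lemma joint_fitting_invariant:
  assumes S: "S \<subseteq> conjugates" and T': "T' \<in> conjugates"
  shows "T' ` joint_fitting S \<sigma> \<subseteq> joint_fitting S \<sigma>"
proof
  fix v assume "v \<in> T' ` joint_fitting S \<sigma>"
  then obtain w where w: "w \<in> joint_fitting S \<sigma>" "v = T' w" by blast
  have wW: "w \<in> W" using w joint_fitting_W by blast
  have "if \<sigma> T then (T ^^ d) v = 0 else v \<in> fitting_range T" if TS: "T \<in> S" for T
  proof -
    have T: "T \<in> conjugates" using S TS by blast
    have c: "if \<sigma> T then (T ^^ d) w = 0 else w \<in> fitting_range T"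
      using w TS unfolding joint_fitting_def by blast
    show ?thesis
    proof (cases "\<sigma> T")
      case True
      then have "(T ^^ d) v = T' ((T ^^ d) w)"
        using conjugates_funpow_commute[OF T T' wW] w(2) by simp
      then show ?thesis using True c conjugates_zero[OF T'] by simp
    next
      case False
      then show ?thesis using c fitting_range_invariant[OF T T'] w(2) by simp
    qed
  qed
  then show "v \<in> joint_fitting S \<sigma>"
    using conjugates_W[OF T' wW] w(2) unfolding joint_fitting_def by blast
qed

lemma joint_fitting_nonzero: "S \<subseteq> conjugates \<Longrightarrow> \<exists>\<sigma>. joint_fitting S \<sigma> \<noteq> {0}"
proof (induction S rule: infinite_finite_induct)
  case (infinite S)
  then show ?case using finite_subset[OF _ finite_conjugates] by blast
next
  case empty
  then show ?case unfolding joint_fitting_def using W_nonzero by simp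
next
  case (insert T S)
  then have S: "S \<subseteq> conjugates" and T: "T \<in> conjugates" by auto
  obtain \<sigma> where "joint_fitting S \<sigma> \<noteq> {0}" using insert S by blast
  then obtain c where c: "c \<in> joint_fitting S \<sigma>" "c \<noteq> 0"
    using vec.subspace_0[OF joint_fitting_subspace[OF S]] by blast
  define C where "C = joint_fitting S \<sigma>"
  have CW: "C \<subseteq> W" unfolding C_def using joint_fitting_W .
  have C: "vec.subspace C" unfolding C_def using joint_fitting_subspace[OF S] .
  have TC: "T ` C \<subseteq> C" unfolding C_def using joint_fitting_invariant[OF S T] .
  obtain k r where kr: "k \<in> C" "(T ^^ d) k = 0" "r \<in> (T ^^ d) ` C" "c = k + r"
    using fitting_kernel_image_sum[OF conjugates_linear[OF T] C TC vec.dim_subset[OF CW]] c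
    unfolding C_def by blast
  have rC: "r \<in> C" using kr(3) funpow_in_invariant[OF TC] by blast
  have r_range: "r \<in> fitting_range T" using kr(3) CW unfolding fitting_range_def by blast
  have mem: "x \<in> joint_fitting (insert T S) (\<sigma>(T := v))"
    if "x \<in> C" "if v then (T ^^ d) x = 0 else x \<in> fitting_range T" for x v
    using that insert.hyps(2) unfolding C_def joint_fitting_def by auto
  show ?case
  proof (cases "k = 0")
    case True
    then have "r \<noteq> 0" using kr(4) c(2) by simp
    then show ?thesis using mem[OF rC, of False] r_range by auto
  next
    case False
    then show ?thesis using mem[OF kr(1), of True] kr(2) by auto
  qed
qed

abbreviation component where "component \<equiv> joint_fitting conjugates"

lemma components_orthogonal:
  assumes ne: "component \<sigma> \<noteq> component \<tau>" shows "orthogonal_sets (component \<sigma>) (component \<tau>)"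
proof -
  obtain T where T: "T \<in> conjugates" "\<sigma> T \<noteq> \<tau> T"
  proof (rule ccontr)
    assume "\<not> thesis"
    then have "\<forall>T\<in>conjugates. \<sigma> T = \<tau> T" using that by blast
    then show False using ne unfolding joint_fitting_def by auto
  qed
  \<comment> \<open>the Fitting null part of T is orthogonal to its Fitting range, as T^d has an adjoint\<close>
  have key: "b x y = 0" if x: "x \<in> W" "(T ^^ d) x = 0" and y: "y \<in> fitting_range T" for x y
  proof -
    obtain z where "z \<in> W" "y = (T ^^ d) z" using y unfolding fitting_range_def by blast
    then show ?thesis using conjugates_funpow_adjoint[OF T(1) x(1)] x(2) by simp
  qed
  show ?thesis unfolding orthogonal_sets_def
  proof (intro ballI)
    fix u v assume u: "u \<in> component \<sigma>" and v: "v \<in> component \<tau>"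
    have uW: "u \<in> W" and vW: "v \<in> W" using u v joint_fitting_W by auto
    have cu: "if \<sigma> T then (T ^^ d) u = 0 else u \<in> fitting_range T"
      and cv: "if \<tau> T then (T ^^ d) v = 0 else v \<in> fitting_range T"
      using u v T unfolding joint_fitting_def by blast+
    show "b u v = 0"
    proof (cases "\<sigma> T")
      case True
      then show ?thesis using key[OF uW] cu cv T(2) by simp
    next
      case False
      then have "b v u = 0" using key[OF vW] cu cv T(2) by simp
      then show ?thesis using b_sym by metis
    qed
  qed
qed

lemma component_image_subset:
  assumes h: "h \<in> H" shows "h ` component \<sigma> \<subseteq> component (\<lambda>T. \<sigma> (conjug (ginv h) T))"
proof
  fix v assume "v \<in> h ` component \<sigma>"
  then obtain w where w: "w \<in> component \<sigma>" "v = h w" by blast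
  have o: "h \<in> orth_set Q" using H_orth_set h by blast
  have wW: "w \<in> W" using w joint_fitting_W by blast
  have "if \<sigma> (conjug (ginv h) T) then (T ^^ d) v = 0 else v \<in> fitting_range T"
    if T: "T \<in> conjugates" for T
  proof -
    define T' where "T' = conjug (ginv h) T"
    have T': "T' \<in> conjugates" unfolding T'_def using conjugates_split(2)[OF h T] .
    have T_eq: "T = conjug h T'" unfolding T'_def using conjugates_split(1)[OF h T] .
    have pow: "(T ^^ d) (h x) = h ((T' ^^ d) x)" for x
      unfolding T_eq using conjug_funpow[OF o] ginv_left[OF o] by simp
    have c: "if \<sigma> T' then (T' ^^ d) w = 0 else w \<in> fitting_range T'"
      using w T' unfolding joint_fitting_def by blast
    show ?thesis
    proof (cases "\<sigma> T'")
      case True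
      then show ?thesis using c pow[of w] w(2) isometry_zero[OF o] unfolding T'_def by simp
    next
      case False
      then obtain z where z: "z \<in> W" "w = (T' ^^ d) z" using c unfolding fitting_range_def by auto
      then have "v = (T ^^ d) (h z)" using pow[of z] w(2) by simp
      then have "v \<in> fitting_range T" using H_W[OF h z(1)] unfolding fitting_range_def by blast
      then show ?thesis using False unfolding T'_def by simp
    qed
  qed
  then show "v \<in> component (\<lambda>T. \<sigma> (conjug (ginv h) T))"
    using H_W[OF h wW] w(2) unfolding joint_fitting_def by blast
qed

lemma component_image:
  assumes h: "h \<in> H" shows "h ` component \<sigma> = component (\<lambda>T. \<sigma> (conjug (ginv h) T))"
proof
  have o: "h \<in> orth_set Q" using H_orth_set h by blast
  have "(\<lambda>T. \<sigma> (conjug (ginv h) (conjug (ginv (ginv h)) T))) = \<sigma>"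
    by (simp add: ginv_ginv[OF o] conjug_ginv_conjug[OF o])
  then have "ginv h ` component (\<lambda>T. \<sigma> (conjug (ginv h) T)) \<subseteq> component \<sigma>"
    using component_image_subset[OF H_ginv[OF h], of "\<lambda>T. \<sigma> (conjug (ginv h) T)"] by simp
  show "component (\<lambda>T. \<sigma> (conjug (ginv h) T)) \<subseteq> h ` component \<sigma>"
  proof
    fix v assume "v \<in> component (\<lambda>T. \<sigma> (conjug (ginv h) T))"
    then have "ginv h v \<in> component \<sigma>"
      using \<open>ginv h ` component (\<lambda>T. \<sigma> (conjug (ginv h) T)) \<subseteq> component \<sigma>\<close> by blast
    moreover have "v = h (ginv h v)" using ginv_right[OF o] by simp
    ultimately show "v \<in> h ` component \<sigma>" by blast
  qed
qed (rule component_image_subset[OF h])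

definition nonzero_components where
  "nonzero_components = {component \<sigma> | \<sigma>. component \<sigma> \<noteq> {0}}"

lemma nonzero_components_invariant:
  assumes h: "h \<in> H" and A: "A \<in> nonzero_components" shows "h ` A \<in> nonzero_components"
proof -
  obtain \<sigma> where \<sigma>: "A = component \<sigma>" "component \<sigma> \<noteq> {0}"
    using A unfolding nonzero_components_def by blast
  have "h ` A \<noteq> {0}"
    using isometry_image_nonzero[OF H_orth_set[OF h]] \<sigma> joint_fitting_subspace[OF order_refl] by blast
  then show ?thesis using component_image[OF h] \<sigma>(1) unfolding nonzero_components_def by auto
qed

lemma span_nonzero_components: "vec.span (\<Union>nonzero_components) = W"
proof -
  define S where "S = vec.span (\<Union>nonzero_components)"
  have "S \<subseteq> W"
    unfolding S_def nonzero_components_def using joint_fitting_W subspace_W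
    by (intro vec.span_minimal) auto
  moreover have "h ` S \<subseteq> S" if h: "h \<in> H" for h
  proof -
    have "h ` S = vec.span (h ` \<Union>nonzero_components)"
      unfolding S_def using vec.linear_span_image[OF orth_setD(1)[OF H_orth_set[OF h]]] by metis
    also have "\<dots> \<subseteq> S"
      unfolding S_def using nonzero_components_invariant[OF h] by (intro vec.span_mono) blast
    finally show ?thesis .
  qed
  moreover obtain \<sigma> where "component \<sigma> \<noteq> {0}" using joint_fitting_nonzero[OF order_refl] by blast
  then have "S \<noteq> {0}"
    using vec.span_superset[of "\<Union>nonzero_components"] vec.subspace_0[OF joint_fitting_subspace[OF order_refl]]
    unfolding S_def nonzero_components_def by blast
  ultimately show ?thesis using irreducible_H[of S] unfolding S_def by auto
qed

lemma imprimitive_if_singular_not_nilpotent: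
  assumes sing: "\<exists>w\<in>W. w \<noteq> 0 \<and> (T0 ^^ d) w = 0" and not_nil: "\<exists>w\<in>W. (T0 ^^ d) w \<noteq> 0"
  shows "orth_imprimitivity_system W H nonzero_components"
proof -
  \<comment> \<open>a single component would be all of W, forcing T0^d to be zero or injective on W\<close>
  have "\<exists>A\<in>nonzero_components. \<exists>B\<in>nonzero_components. A \<noteq> B"
  proof (rule ccontr)
    assume "\<not> ?thesis"
    moreover obtain \<sigma> where "component \<sigma> \<noteq> {0}" using joint_fitting_nonzero[OF order_refl] by blast
    ultimately have "nonzero_components = {component \<sigma>}" unfolding nonzero_components_def by blast
    then have "vec.span (component \<sigma>) = W" using span_nonzero_components by simp
    moreover have "vec.span (component \<sigma>) = component \<sigma>"
      using joint_fitting_subspace[OF order_refl] vec.span_eq_iff by blast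
    ultimately have "component \<sigma> = W" by simp
    then have "\<forall>w\<in>W. if \<sigma> T0 then (T0 ^^ d) w = 0 else w \<in> fitting_range T0"
      using T0_conjugates unfolding joint_fitting_def by blast
    then show False
      using sing not_nil fitting_null_range_inter[OF T0_conjugates] by (cases "\<sigma> T0") auto
  qed
  moreover have "\<forall>A\<in>nonzero_components. vec.subspace A \<and> A \<noteq> {0} \<and> A \<subseteq> W"
    unfolding nonzero_components_def using joint_fitting_subspace[OF order_refl] joint_fitting_W by blast
  moreover have "\<forall>A\<in>nonzero_components. \<forall>B\<in>nonzero_components. A \<noteq> B \<longrightarrow> orthogonal_sets A B"
    unfolding nonzero_components_def using components_orthogonal by blast
  moreover have "\<forall>h\<in>H. \<forall>A\<in>nonzero_components. h ` A \<in> nonzero_components"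
    using nonzero_components_invariant by blast
  ultimately show ?thesis
    unfolding orth_imprimitivity_system_def using span_nonzero_components by (intro conjI) assumption+
qed

lemma imprimitive_or_injective_or_zero:
  "(\<exists>DD. orth_imprimitivity_system W H DD) \<or> (\<forall>w\<in>W. T0 w = 0 \<longrightarrow> w = 0) \<or> (\<forall>w\<in>W. T0 w = 0)"
proof (cases "\<exists>w\<in>W. w \<noteq> 0 \<and> (T0 ^^ d) w = 0")
  case False
  have "(T0 ^^ d) w = 0" if "T0 w = 0" for w
    using dim_W_pos funpow_Suc_right[of "d - 1" T0] vec.linear_0[OF linear_map_funpow[OF linear_T0]] that
    by (metis Suc_diff_1 comp_apply less_le_trans zero_less_one)
  then show ?thesis using False by blast
next
  case singular: True
  show ?thesis
  proof (cases "\<exists>w\<in>W. (T0 ^^ d) w \<noteq> 0")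
    case True
    then show ?thesis using imprimitive_if_singular_not_nilpotent[OF singular] by blast
  next
    case False
    then show ?thesis using zero_if_nilpotent by blast
  qed
qed

end

definition plus_minus_id_on :: "'v set \<Rightarrow> ('v \<Rightarrow> 'v::uminus) set" where
  "plus_minus_id_on W = {g. (\<forall>w\<in>W. g w = w) \<or> (\<forall>w\<in>W. g w = - w)}"

context irreducible_block
begin

definition commutes_with_conjugates :: "('a ^ 'n \<Rightarrow> 'a ^ 'n) \<Rightarrow> bool" where
  "commutes_with_conjugates f \<longleftrightarrow> (\<forall>h\<in>H. \<forall>w\<in>W. f (conjug h f w) = conjug h f (f w))"

lemma not_square_minus_id:
  assumes x: "x \<in> H" shows "\<not> (\<forall>w\<in>W. x (x w) = - w)"
proof
  assume xx: "\<forall>w\<in>W. x (x w) = - w"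
  have o: "x \<in> orth_set Q" using H_orth_set x .
  have ginv_x: "ginv x v = - x v" if "v \<in> W" for v
  proof -
    have "x (- x v) = v" using xx that isometry_neg[OF o] by simp
    then show ?thesis using ginv_left[OF o] by metis
  qed
  have skew: "b (x u) v = - b u (x v)" if "u \<in> W" "v \<in> W" for u v
    using b_isometry_adjoint[OF o] ginv_x that b.neg_right by simp
  have inj: "w = 0" if "x w = 0" for w using isometry_eq_0_iff[OF o] that by blast
  have "x ` W \<subseteq> W" using H_W x by blast
  then have "even d"
    using skew_adjoint_even_dim[OF subspace_W nondegenerate_W orth_setD(1)[OF o] _ skew inj] by blast
  then show False using odd_dim_W by simp
qed

lemma commute_or_anticommute:
  assumes x: "x \<in> H" and y: "y \<in> H" and c: "x \<circ> y \<circ> ginv x \<circ> ginv y \<in> plus_minus_id_on W"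
  shows "(\<forall>w\<in>W. x (y w) = y (x w)) \<or> (\<forall>w\<in>W. x (y w) = - y (x w))"
proof -
  define c where "c = x \<circ> y \<circ> ginv x \<circ> ginv y"
  have cyx: "c (y (x w)) = x (y w)" for w
    unfolding c_def using ginv_left[OF H_orth_set[OF x]] ginv_left[OF H_orth_set[OF y]] by simp
  have yxW: "y (x w) \<in> W" if "w \<in> W" for w using H_W x y that by blast
  have "(\<forall>w\<in>W. c w = w) \<or> (\<forall>w\<in>W. c w = - w)" using c unfolding c_def plus_minus_id_on_def by blast
  then show ?thesis
  proof
    assume "\<forall>w\<in>W. c w = w"
    then have "x (y w) = y (x w)" if "w \<in> W" for w using yxW[OF that] cyx[of w] by metis
    then show ?thesis by blast
  next
    assume "\<forall>w\<in>W. c w = - w"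
    then have "x (y w) = - y (x w)" if "w \<in> W" for w using yxW[OF that] cyx[of w] by metis
    then show ?thesis by blast
  qed
qed

lemma squares_commute:
  assumes p: "p \<in> H" and q: "q \<in> H"
    and c: "(\<forall>w\<in>W. p (q w) = q (p w)) \<or> (\<forall>w\<in>W. p (q w) = - q (p w))" and w: "w \<in> W"
  shows "p (p (q (q w))) = q (q (p (p w)))"
  using c
proof
  assume c: "\<forall>w\<in>W. p (q w) = q (p w)"
  have pW: "z \<in> W \<Longrightarrow> p z \<in> W" and qW: "z \<in> W \<Longrightarrow> q z \<in> W" for z using H_W p q by auto
  have "p (p (q (q w))) = p (q (p (q w)))" using c qW[OF w] by simp
  also have "\<dots> = q (p (p (q w)))" using c pW qW w by simp
  also have "\<dots> = q (p (q (p w)))" using c w by simp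
  also have "\<dots> = q (q (p (p w)))" using c pW w by simp
  finally show ?thesis .
next
  assume c: "\<forall>w\<in>W. p (q w) = - q (p w)"
  have neg: "p (- v) = - p v" "q (- v) = - q v" for v
    using isometry_neg H_orth_set p q by blast+
  have pW: "z \<in> W \<Longrightarrow> p z \<in> W" and qW: "z \<in> W \<Longrightarrow> q z \<in> W" for z using H_W p q by auto
  have "p (p (q (q w))) = - p (q (p (q w)))" using c qW[OF w] neg by simp
  also have "\<dots> = q (p (p (q w)))" using c pW[OF qW[OF w]] by simp
  also have "\<dots> = - q (p (q (p w)))" using c w neg by simp
  also have "\<dots> = q (q (p (p w)))" using c pW[OF w] neg by simp
  finally show ?thesis .
qed

lemma commuting_conjugates_skew_part:
  assumes y: "y \<in> H" and yc: "commutes_with_conjugates y"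
  shows "commuting_conjugates Q G W H (\<lambda>v. y v - ginv y v) (-1)"
proof (rule commuting_conjugates.intro[OF irreducible_block_axioms commuting_conjugates_axioms.intro])
  have oy: "y \<in> orth_set Q" and oyi: "ginv y \<in> orth_set Q" using H_orth_set y ginv_in by auto
  show "linear_map (\<lambda>v. y v - ginv y v)"
    using vec.linear_compose_sub[OF orth_setD(1)[OF oy] orth_setD(1)[OF oyi]] by simp
  show "(\<lambda>v. y v - ginv y v) ` W \<subseteq> W"
    using H_W y H_ginv vec.subspace_diff[OF subspace_W] by blast
  show "b (y u - ginv y u) v = - 1 * b u (y v - ginv y v)" if "u \<in> W" "v \<in> W" for u v
    using b_isometry_adjoint[OF oy, of u v] b_isometry_adjoint[OF oyi, of u v] ginv_ginv[OF oy]
    by (simp add: b.diff_left b.diff_right)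
  fix h w assume h: "h \<in> H" and w: "w \<in> W"
  have conj_yi: "conjug h (ginv y) = ginv (conjug h y)"
    using ginv_conjug[OF oy H_orth_set[OF h]] by simp
  have c1: "\<forall>w\<in>W. y (conjug h y w) = conjug h y (y w)" using yc h unfolding commutes_with_conjugates_def by blast
  have qH: "conjug h y \<in> H" using conjug_in_H h y by blast
  have c2: "\<forall>w\<in>W. ginv y (conjug h y w) = conjug h y (ginv y w)"
    using ginv_commute_on_W[OF y qH c1] .
  have c3: "\<forall>w\<in>W. conjug h (ginv y) (y w) = y (conjug h (ginv y) w)"
    using ginv_commute_on_W[OF qH y] c1 unfolding conj_yi by metis
  have c4: "\<forall>w\<in>W. conjug h (ginv y) (ginv y w) = ginv y (conjug h (ginv y) w)"
    using ginv_commute_on_W[OF qH H_ginv[OF y]] c2 unfolding conj_yi by metis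
  have diff: "conjug h (\<lambda>v. y v - ginv y v) v = conjug h y v - conjug h (ginv y) v" for v
    unfolding conjug_def using isometry_diff[OF H_orth_set[OF h]] by simp
  have lin: "f (a - c) = f a - f c" if "f \<in> H" for f a c using isometry_diff H_orth_set that by blast
  show "y (conjug h (\<lambda>v. y v - ginv y v) w) - ginv y (conjug h (\<lambda>v. y v - ginv y v) w)
      = conjug h (\<lambda>v. y v - ginv y v) (y w - ginv y w)"
  proof -
    have A: "y (conjug h y w) = conjug h y (y w)" "ginv y (conjug h y w) = conjug h y (ginv y w)"
      "y (conjug h (ginv y) w) = conjug h (ginv y) (y w)"
      "ginv y (conjug h (ginv y) w) = conjug h (ginv y) (ginv y w)"
      using c1 c2 c3 c4 w by auto
    show ?thesis
      unfolding diff lin[OF y] lin[OF H_ginv[OF y]] lin[OF qH]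
        lin[OF conjug_in_H[OF h H_ginv[OF y]]] A
      by (simp add: algebra_simps)
  qed
qed simp

lemma commuting_conjugates_sym_part:
  assumes y: "y \<in> H" and yc: "commutes_with_conjugates y" and yy: "\<forall>w\<in>W. ginv y w = y w"
  shows "commuting_conjugates Q G W H (\<lambda>v. y v - v) 1"
proof (rule commuting_conjugates.intro[OF irreducible_block_axioms commuting_conjugates_axioms.intro])
  have oy: "y \<in> orth_set Q" using H_orth_set y by blast
  show "linear_map (\<lambda>v. y v - v)"
    using vec.linear_compose_sub[OF orth_setD(1)[OF oy] vec.linear_id] by (simp add: id_def)
  show "(\<lambda>v. y v - v) ` W \<subseteq> W" using H_W y vec.subspace_diff[OF subspace_W] by blast
  show "b (y u - u) v = 1 * b u (y v - v)" if "u \<in> W" "v \<in> W" for u v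
    using b_isometry_adjoint[OF oy, of u v] yy that by (simp add: b.diff_left b.diff_right)
  fix h w assume h: "h \<in> H" and w: "w \<in> W"
  have oh: "h \<in> orth_set Q" using H_orth_set h by blast
  have diff: "conjug h (\<lambda>v. y v - v) v = conjug h y v - v" for v
    unfolding conjug_def using isometry_diff[OF oh] ginv_right[OF oh] by simp
  have A: "y (conjug h y w) = conjug h y (y w)"
    using yc h w unfolding commutes_with_conjugates_def by blast
  show "y (conjug h (\<lambda>v. y v - v) w) - conjug h (\<lambda>v. y v - v) w
      = conjug h (\<lambda>v. y v - v) (y w - w)"
    unfolding diff isometry_diff[OF oy] isometry_diff[OF H_orth_set[OF conjug_in_H[OF h y]]] A
    by (simp add: algebra_simps)
qed simp

lemma imprimitive_if_involution:
  assumes y: "y \<in> H" and y_nonscalar: "y \<notin> plus_minus_id_on W" and yc: "commutes_with_conjugates y"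
    and yy: "\<forall>w\<in>W. ginv y w = y w"
  shows "\<exists>DD. orth_imprimitivity_system W H DD"
proof -
  interpret T: commuting_conjugates Q G W H "\<lambda>v. y v - v" 1
    using commuting_conjugates_sym_part[OF y yc yy] .
  have oy: "y \<in> orth_set Q" using H_orth_set y by blast
  consider "\<exists>DD. orth_imprimitivity_system W H DD"
    | "\<forall>w\<in>W. y w - w = 0 \<longrightarrow> w = 0" | "\<forall>w\<in>W. y w - w = 0"
    using T.imprimitive_or_injective_or_zero by blast
  then show ?thesis
  proof cases
    case 2
    have "y w = - w" if w: "w \<in> W" for w
    proof -
      have "y (y w) = w" using yy w ginv_right[OF oy] by metis
      then have "y (y w + w) - (y w + w) = 0" using isometry_add[OF oy] by simp
      moreover have "y w + w \<in> W" using H_W[OF y w] w vec.subspace_add[OF subspace_W] by blast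
      ultimately have "y w + w = 0" using 2 by blast
      then show ?thesis by (simp add: eq_neg_iff_add_eq_0)
    qed
    then show ?thesis using y_nonscalar unfolding plus_minus_id_on_def by blast
  next
    case 3
    then show ?thesis using y_nonscalar unfolding plus_minus_id_on_def by simp
  qed
qed

lemma imprimitive_if_commutes_with_conjugates:
  assumes y: "y \<in> H" and y_nonscalar: "y \<notin> plus_minus_id_on W" and yc: "commutes_with_conjugates y"
  shows "\<exists>DD. orth_imprimitivity_system W H DD"
proof -
  interpret T: commuting_conjugates Q G W H "\<lambda>v. y v - ginv y v" "-1"
    using commuting_conjugates_skew_part[OF y yc] .
  have oy: "y \<in> orth_set Q" using H_orth_set y by blast
  consider "\<exists>DD. orth_imprimitivity_system W H DD"
    | "\<forall>w\<in>W. y w - ginv y w = 0 \<longrightarrow> w = 0" | "\<forall>w\<in>W. y w - ginv y w = 0"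
    using T.imprimitive_or_injective_or_zero by blast
  then show ?thesis
  proof cases
    case 2
    have skew: "b (y u - ginv y u) v = - b u (y v - ginv y v)" if "u \<in> W" "v \<in> W" for u v
      using T.T0_adjoint that by simp
    have inj: "w = 0" if "w \<in> W" "y w - ginv y w = 0" for w using 2 that by blast
    have "even d"
      using skew_adjoint_even_dim[OF subspace_W nondegenerate_W T.linear_T0 T.T0_W skew inj] .
    then show ?thesis using odd_dim_W by simp
  next
    case 3
    then show ?thesis using imprimitive_if_involution[OF y y_nonscalar yc] by simp
  qed
qed

lemma exists_nonscalar: "\<not> H \<subseteq> plus_minus_id_on W"
proof
  assume H_pm: "H \<subseteq> plus_minus_id_on W"
  obtain w where w: "w \<in> W" "w \<noteq> 0" using W_nonzero zero_in_W by blast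
  define U where "U = vec.span {w}"
  have U: "vec.subspace U" unfolding U_def by simp
  have wU: "w \<in> U" unfolding U_def by (simp add: vec.span_base)
  have UW: "U \<subseteq> W" unfolding U_def using vec.span_minimal[of "{w}" W] w subspace_W by simp
  have "h ` U \<subseteq> U" if h: "h \<in> H" for h
  proof -
    have "h w = w \<or> h w = - w" using H_pm h w unfolding plus_minus_id_on_def by blast
    moreover have "- w \<in> U" unfolding U_def by (intro vec.span_neg vec.span_base) simp
    ultimately have hwU: "h w \<in> U" using wU by auto
    have "h ` U = vec.span {h w}"
      unfolding U_def using vec.linear_span_image[OF orth_setD(1)[OF H_orth_set[OF h]], of "{w}"] by simp
    also have "\<dots> \<subseteq> U" using vec.span_minimal[of "{h w}" U] hwU U by simp
    finally show ?thesis .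
  qed
  moreover have "U \<noteq> {0}" using wU w by blast
  ultimately have "U = W" using irreducible_H[OF U UW] by blast
  then have "d = vec.dim {w}" unfolding U_def using vec.dim_span by metis
  then have "d = 1" using w vec.dim_singleton by simp
  then show False using dim_W_not_1 by simp
qed

lemma exists_normal_subgroup_commutators_pm_id:
  obtains N where "N \<subseteq> H" "\<And>h x. h \<in> H \<Longrightarrow> x \<in> N \<Longrightarrow> conjug h x \<in> N"
    "\<not> N \<subseteq> plus_minus_id_on W"
    "\<And>x y. x \<in> N \<Longrightarrow> y \<in> N \<Longrightarrow> x \<circ> y \<circ> ginv x \<circ> ginv y \<in> plus_minus_id_on W"
proof -
  interpret O: group "orth_group Q" by (rule group_orth_group)
  define HH where "HH = (orth_group Q)\<lparr>carrier := H\<rparr>"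
  interpret HH: group HH unfolding HH_def using O.subgroup_imp_group[OF subgroup_H] .
  have carrier_HH: "carrier HH = H" unfolding HH_def by simp
  have inv_HH: "inv\<^bsub>HH\<^esub> x = ginv x" if "x \<in> H" for x
    unfolding HH_def ginv_def using O.m_inv_consistent[OF subgroup_H that] .
  have mult_HH: "x \<otimes>\<^bsub>HH\<^esub> y = x \<circ> y" for x y unfolding HH_def by (simp add: orth_group_simps)
  have "solvable HH"
    using group.solvable_restrict[OF O.subgroup_imp_group[OF subgroup_G]
        O.subgroup_incl[OF subgroup_H subgroup_G H_subset] solvable_G]
    unfolding HH_def by simp
  moreover have "\<one>\<^bsub>HH\<^esub> \<in> plus_minus_id_on W"
    unfolding HH_def plus_minus_id_on_def by (simp add: orth_group_simps)
  moreover have "\<not> carrier HH \<subseteq> plus_minus_id_on W" using exists_nonscalar carrier_HH by simp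
  ultimately obtain N where N: "N \<lhd> HH" "\<not> N \<subseteq> plus_minus_id_on W"
    "\<forall>x\<in>N. \<forall>y\<in>N. x \<otimes>\<^bsub>HH\<^esub> y \<otimes>\<^bsub>HH\<^esub> inv\<^bsub>HH\<^esub> x \<otimes>\<^bsub>HH\<^esub> inv\<^bsub>HH\<^esub> y \<in> plus_minus_id_on W"
    using HH.exists_normal_subgroup_commutators_in by blast
  have NH: "N \<subseteq> H" using subgroup.subset[OF HH.normal_invE(1)[OF N(1)]] carrier_HH by simp
  show ?thesis
  proof (rule that[OF NH _ N(2)])
    show "conjug h x \<in> N" if h: "h \<in> H" and x: "x \<in> N" for h x
      using HH.normal_invE(2)[OF N(1), of h x] h x inv_HH[OF h] mult_HH carrier_HH
      unfolding conjug_def by simp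
    show "x \<circ> y \<circ> ginv x \<circ> ginv y \<in> plus_minus_id_on W" if x: "x \<in> N" and y: "y \<in> N" for x y
      using N(3) x y inv_HH mult_HH NH by (simp add: subset_iff)
  qed
qed

lemma square_commutes_with_conjugates:
  assumes x: "x \<in> H"
    and sign: "\<And>h. h \<in> H \<Longrightarrow>
      (\<forall>w\<in>W. x (conjug h x w) = conjug h x (x w)) \<or> (\<forall>w\<in>W. x (conjug h x w) = - conjug h x (x w))"
  shows "commutes_with_conjugates (x \<circ> x)"
  unfolding commutes_with_conjugates_def
proof (intro ballI)
  fix h w assume h: "h \<in> H" and w: "w \<in> W"
  have "conjug h (x \<circ> x) v = conjug h x (conjug h x v)" for v
    unfolding conjug_def using ginv_left[OF H_orth_set[OF h]] by simp
  then show "(x \<circ> x) (conjug h (x \<circ> x) w) = conjug h (x \<circ> x) ((x \<circ> x) w)"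
    using squares_commute[OF x conjug_in_H[OF h x] sign[OF h] w] by simp
qed

lemma involution_commutes_with_conjugates:
  assumes x: "x \<in> H" and xx: "\<forall>w\<in>W. x (x w) = w"
    and sign: "\<And>h. h \<in> H \<Longrightarrow>
      (\<forall>w\<in>W. x (conjug h x w) = conjug h x (x w)) \<or> (\<forall>w\<in>W. x (conjug h x w) = - conjug h x (x w))"
  shows "commutes_with_conjugates x"
  unfolding commutes_with_conjugates_def
proof (intro ballI, rule ccontr)
  fix h w0 assume h: "h \<in> H" and w0: "w0 \<in> W" and ne: "x (conjug h x w0) \<noteq> conjug h x (x w0)"
  define x' where "x' = conjug h x"
  have x': "x' \<in> H" unfolding x'_def using conjug_in_H h x by blast
  \<comment> \<open>x and x' are anticommuting involutions on W, so x x' squares to -1\<close>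
  have anti: "\<forall>w\<in>W. x (x' w) = - x' (x w)" using sign[OF h] w0 ne unfolding x'_def by auto
  have x'x': "x' (x' w) = w" if "w \<in> W" for w
  proof -
    have "ginv h w \<in> W" using H_W H_ginv h that by blast
    then show ?thesis
      unfolding x'_def conjug_def using xx ginv_left[OF H_orth_set[OF h]] ginv_right[OF H_orth_set[OF h]]
      by simp
  qed
  have "\<forall>w\<in>W. (x \<circ> x') ((x \<circ> x') w) = - w"
  proof
    fix w assume w: "w \<in> W"
    have "x' w \<in> W" using H_W x' w by blast
    then have "x' (x (x' w)) = - x (x' (x' w))" using anti H_W x' by (metis minus_minus)
    then show "(x \<circ> x') ((x \<circ> x') w) = - w"
      using x'x'[OF w] xx w isometry_neg[OF H_orth_set[OF x]] by simp
  qed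
  then show False using not_square_minus_id H_comp[OF x x'] by blast
qed

text \<open>Solvability enters here: in the last term N of the derived series of H not acting as \<plusminus>1
  on W, any two elements commute or anticommute on W.\<close>

lemma exists_commuting_with_conjugates:
  "\<exists>y\<in>H. y \<notin> plus_minus_id_on W \<and> commutes_with_conjugates y"
proof -
  obtain N where NH: "N \<subseteq> H"
    and N_conj: "\<And>h x. h \<in> H \<Longrightarrow> x \<in> N \<Longrightarrow> conjug h x \<in> N"
    and N_pm: "\<not> N \<subseteq> plus_minus_id_on W"
    and N_comm: "\<And>x y. x \<in> N \<Longrightarrow> y \<in> N \<Longrightarrow> x \<circ> y \<circ> ginv x \<circ> ginv y \<in> plus_minus_id_on W"
    using exists_normal_subgroup_commutators_pm_id by blast
  obtain x where x: "x \<in> N" "x \<notin> plus_minus_id_on W" using N_pm by blast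
  have xH: "x \<in> H" using NH x(1) by blast
  have sign: "(\<forall>w\<in>W. x (conjug h x w) = conjug h x (x w)) \<or> (\<forall>w\<in>W. x (conjug h x w) = - conjug h x (x w))"
    if "h \<in> H" for h
    using commute_or_anticommute[OF xH _ N_comm[OF x(1) N_conj[OF that x(1)]]] NH N_conj[OF that x(1)]
    by blast
  show ?thesis
  proof (cases "x \<circ> x \<in> plus_minus_id_on W")
    case False
    then show ?thesis using square_commutes_with_conjugates[OF xH sign] H_comp[OF xH xH] by blast
  next
    case True
    then have "\<forall>w\<in>W. x (x w) = w"
      using not_square_minus_id[OF xH] unfolding plus_minus_id_on_def by auto
    then show ?thesis using involution_commutes_with_conjugates[OF xH _ sign] x(2) xH by blast
  qed
qed

theorem imprimitive: "\<exists>DD. orth_imprimitivity_system W H DD"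
  using exists_commuting_with_conjugates imprimitive_if_commutes_with_conjugates by blast

end

section \<open>Refining invariant decompositions to lines\<close>

context solvable_irreducible_isometry_group
begin

definition stabilizer :: "('a ^ 'n) set \<Rightarrow> ('a ^ 'n \<Rightarrow> 'a ^ 'n) set" where
  "stabilizer X = {g\<in>G. g ` X = X}"

lemma stabilizer_subgroup: "subgroup (stabilizer X) (orth_group Q)"
proof (rule group.subgroupI[OF group_orth_group])
  show "stabilizer X \<subseteq> carrier (orth_group Q)"
    unfolding stabilizer_def using G_orth_set orth_group_simps by blast
  show "stabilizer X \<noteq> {}" unfolding stabilizer_def using G_id by auto
next
  fix g assume "g \<in> stabilizer X"
  then have g: "g \<in> G" "g ` X = X" unfolding stabilizer_def by auto
  have "ginv g ` (g ` X) = X" using ginv_left[OF G_orth_set[OF g(1)]] by (simp add: image_image)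
  then show "inv\<^bsub>orth_group Q\<^esub> g \<in> stabilizer X"
    using G_ginv g unfolding stabilizer_def ginv_def by simp
next
  fix g h assume "g \<in> stabilizer X" "h \<in> stabilizer X"
  then have gh: "g \<in> G" "h \<in> G" "g ` X = X" "h ` X = X" unfolding stabilizer_def by auto
  then have "(g \<circ> h) ` X = X" by (metis image_comp)
  then show "g \<otimes>\<^bsub>orth_group Q\<^esub> h \<in> stabilizer X"
    unfolding stabilizer_def orth_group_simps using G_comp gh by blast
qed

text \<open>A stabilizer-invariant subspace U of a member X spans V together with its G-translates;
  those not inside X are orthogonal to X, so X \<subseteq> U by nondegeneracy.\<close>

lemma stabilizer_irreducible:
  assumes D: "invariant_decomp D" and X: "X \<in> D"
    and U: "vec.subspace U" "U \<subseteq> X" "\<forall>h\<in>stabilizer X. h ` U \<subseteq> U"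
  shows "U = {0} \<or> U = X"
proof (cases "U = {0}")
  case False
  define R where "R = (\<Union>g\<in>{g\<in>G. g ` X \<noteq> X}. g ` U)"
  have "(\<Union>g\<in>G. g ` U) \<subseteq> U \<union> R"
  proof
    fix v assume "v \<in> (\<Union>g\<in>G. g ` U)"
    then obtain g where g: "g \<in> G" "v \<in> g ` U" by blast
    show "v \<in> U \<union> R"
    proof (cases "g ` X = X")
      case True
      then have "g \<in> stabilizer X" unfolding stabilizer_def using g(1) by blast
      then show ?thesis using U(3) g(2) by blast
    next
      case False
      then show ?thesis unfolding R_def using g by blast
    qed
  qed
  then have "vec.span (\<Union>g\<in>G. g ` U) \<subseteq> vec.span (U \<union> R)" by (rule vec.span_mono)
  then have UR: "vec.span (U \<union> R) = UNIV" using span_orbit_eq_UNIV[OF U(1) False] by auto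
  have "orthogonal_sets X R"
    unfolding orthogonal_sets_def R_def
  proof (intro ballI)
    fix u v assume u: "u \<in> X" and "v \<in> (\<Union>g\<in>{g\<in>G. g ` X \<noteq> X}. g ` U)"
    then obtain g where g: "g \<in> G" "g ` X \<noteq> X" "v \<in> g ` X" using U(2) by blast
    have "g ` X \<in> D" using invariant_decompD(5)[OF D g(1) X] .
    then have "orthogonal_sets X (g ` X)" using invariant_decompD(3)[OF D X] g(2) by metis
    then show "b u v = 0" using u g(3) unfolding orthogonal_sets_def by blast
  qed
  then have orth: "orthogonal_sets X (vec.span R)" using orthogonal_sets_span by blast
  have "X \<subseteq> U"
  proof
    fix w assume w: "w \<in> X"
    have "w \<in> vec.span (U \<union> R)" using UR by simp
    then obtain a r where ar: "w = a + r" "a \<in> U" "r \<in> vec.span R"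
      using vec.span_Un[of U R] vec.span_eq_iff[THEN iffD2, OF U(1)] by auto
    have "a \<in> X" using ar(2) U(2) by blast
    then have "w - a \<in> X" using w vec.subspace_diff[OF invariant_decompD(1)[OF D X]] by blast
    then have "r \<in> X" using ar(1) by simp
    then have "r = 0"
      using nondegenerate_on_orthogonal_inter[OF invariant_decomp_nondegenerate[OF D X] orth] ar(3)
      by blast
    then show "w \<in> U" using ar by simp
  qed
  then show ?thesis using U(2) by blast
qed simp

lemma stabilizer_imprimitive:
  assumes D: "invariant_decomp D" and X: "X \<in> D" and dim: "vec.dim X \<noteq> 1"
  shows "\<exists>DD. orth_imprimitivity_system X (stabilizer X) DD"
proof -
  have "irreducible_block Q G X (stabilizer X)"
  proof (rule irreducible_block.intro[OF solvable_irreducible_isometry_group_axioms irreducible_block_axioms.intro])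
    show "vec.subspace X" using invariant_decompD(1)[OF D X] .
    show "nondegenerate_on X" using invariant_decomp_nondegenerate[OF D X] .
    show "odd (vec.dim X)" using invariant_decomp_odd_dim[OF D X] .
    show "\<forall>h\<in>stabilizer X. h ` X = X" unfolding stabilizer_def by blast
    show "U = {0} \<or> U = X" if "vec.subspace U" "U \<subseteq> X" "\<forall>h\<in>stabilizer X. h ` U \<subseteq> U" for U
      using stabilizer_irreducible[OF D X that] .
    show "vec.dim X \<noteq> 1" using dim .
    show "subgroup (stabilizer X) (orth_group Q)" by (rule stabilizer_subgroup)
    show "stabilizer X \<subseteq> G" unfolding stabilizer_def by blast
  qed
  then show ?thesis using irreducible_block.imprimitive by blast
qed

definition translates :: "('a ^ 'n) set set \<Rightarrow> ('a ^ 'n) set set" where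
  "translates DD = {g ` A | g A. g \<in> G \<and> A \<in> DD}"

lemma translates_orthogonal:
  assumes D: "invariant_decomp D" and X: "X \<in> D"
    and DD: "orth_imprimitivity_system X (stabilizer X) DD"
    and Z: "Z \<in> translates DD" "Z' \<in> translates DD" "Z \<noteq> Z'"
  shows "orthogonal_sets Z Z'"
proof -
  obtain g A where gA: "g \<in> G" "A \<in> DD" "Z = g ` A" using Z(1) unfolding translates_def by blast
  obtain g' A' where gA': "g' \<in> G" "A' \<in> DD" "Z' = g' ` A'" using Z(2) unfolding translates_def by blast
  have g: "g \<in> orth_set Q" using G_orth_set[OF gA(1)] .
  show ?thesis
  proof (cases "g ` X = g' ` X")
    case False
    then have "orthogonal_sets (g ` X) (g' ` X)"
      using invariant_decompD(3,5)[OF D] X gA(1) gA'(1) by blast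
    moreover have "Z \<subseteq> g ` X" "Z' \<subseteq> g' ` X"
      using orth_imprimitivity_systemD(3)[OF DD] gA gA' by blast+
    ultimately show ?thesis using orthogonal_sets_mono by blast
  next
    case True
    \<comment> \<open>then Z and Z' are translates by g of two distinct blocks\<close>
    define h where "h = ginv g \<circ> g'"
    have "h ` X = ginv g ` (g ` X)" unfolding h_def using True by (simp add: image_comp)
    also have "\<dots> = X" using ginv_left[OF g] by (simp add: image_comp)
    finally have h: "h \<in> stabilizer X"
      unfolding stabilizer_def h_def using G_comp G_ginv gA(1) gA'(1) by blast
    have Z': "Z' = g ` (h ` A')"
      unfolding gA'(3) h_def using ginv_right[OF g] by (simp add: image_comp comp_def)
    have "h ` A' \<in> DD" using orth_imprimitivity_systemD(6)[OF DD h gA'(2)] .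
    moreover have "A \<noteq> h ` A'" using Z(3) Z' gA(3) by blast
    ultimately have "orthogonal_sets A (h ` A')" using orth_imprimitivity_systemD(4)[OF DD gA(2)] by blast
    then show ?thesis unfolding gA(3) Z' using orthogonal_sets_image[OF g] by blast
  qed
qed

lemma span_translates:
  assumes D: "invariant_decomp D" and X: "X \<in> D"
    and DD: "orth_imprimitivity_system X (stabilizer X) DD"
  shows "vec.span (\<Union>(translates DD)) = UNIV"
proof -
  have "Y \<subseteq> vec.span (\<Union>(translates DD))" if Y: "Y \<in> D" for Y
  proof -
    obtain g where g: "g \<in> G" "g ` X = Y" using invariant_decomp_transitive[OF D X Y] by blast
    have "Y = g ` vec.span (\<Union>DD)" using g orth_imprimitivity_systemD(5)[OF DD] by simp
    also have "\<dots> = vec.span (g ` \<Union>DD)"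
      using vec.linear_span_image[OF orth_setD(1)[OF G_orth_set[OF g(1)]]] by metis
    also have "\<dots> \<subseteq> vec.span (\<Union>(translates DD))"
      unfolding translates_def using g(1) by (intro vec.span_mono) blast
    finally show ?thesis .
  qed
  then have "vec.span (\<Union>D) \<subseteq> vec.span (\<Union>(translates DD))"
    by (intro vec.span_minimal) (auto simp: vec.subspace_span)
  then show ?thesis using invariant_decompD(4)[OF D] by blast
qed

lemma invariant_decomp_translates:
  assumes D: "invariant_decomp D" and X: "X \<in> D"
    and DD: "orth_imprimitivity_system X (stabilizer X) DD"
  shows "invariant_decomp (translates DD)"
proof -
  have "vec.subspace Z \<and> Z \<noteq> {0}" if Z: "Z \<in> translates DD" for Z
  proof -
    obtain g A where gA: "g \<in> G" "A \<in> DD" "Z = g ` A" using Z unfolding translates_def by blast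
    show ?thesis
      unfolding gA(3)
      using isometry_image_subspace[OF G_orth_set[OF gA(1)] orth_imprimitivity_systemD(1)[OF DD gA(2)]]
        isometry_image_nonzero[OF G_orth_set[OF gA(1)] orth_imprimitivity_systemD(1,2)[OF DD gA(2)]]
      by simp
  qed
  moreover have "g ` Z \<in> translates DD" if g: "g \<in> G" and Z: "Z \<in> translates DD" for g Z
  proof -
    obtain g' A where gA: "g' \<in> G" "A \<in> DD" "Z = g' ` A" using Z unfolding translates_def by blast
    then have "g ` Z = (g \<circ> g') ` A" by (simp add: image_comp)
    then show ?thesis unfolding translates_def using G_comp[OF g gA(1)] gA(2) by blast
  qed
  ultimately show ?thesis
    unfolding invariant_decomp_def
    using translates_orthogonal[OF D X DD] span_translates[OF D X DD] by blast
qed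

text \<open>Each member Y of D contains the translate of one block A0 of X, and X contains two distinct
  translates, so the refined decomposition has more members.\<close>

lemma card_translates_gt:
  assumes D: "invariant_decomp D" and X: "X \<in> D"
    and DD: "orth_imprimitivity_system X (stabilizer X) DD"
  shows "card D < card (translates DD)"
proof -
  obtain A0 A1 where A: "A0 \<in> DD" "A1 \<in> DD" "A0 \<noteq> A1"
    using orth_imprimitivity_systemD(7)[OF DD] by blast
  define gs where "gs Y = (SOME g. g \<in> G \<and> g ` X = Y)" for Y
  have gs: "gs Y \<in> G" "gs Y ` X = Y" if "Y \<in> D" for Y
  proof -
    have "\<exists>g. g \<in> G \<and> g ` X = Y" using invariant_decomp_transitive[OF D X that] by blast
    from someI_ex[OF this] show "gs Y \<in> G" "gs Y ` X = Y" unfolding gs_def by auto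
  qed
  have block_image: "gs Y ` A \<subseteq> Y" "vec.subspace (gs Y ` A)" "gs Y ` A \<noteq> {0}"
    if "Y \<in> D" "A \<in> DD" for Y A
    using image_mono[OF orth_imprimitivity_systemD(3)[OF DD that(2)], of "gs Y"] gs(2)[OF that(1)]
      isometry_image_subspace[OF G_orth_set[OF gs(1)[OF that(1)]] orth_imprimitivity_systemD(1)[OF DD that(2)]]
      isometry_image_nonzero[OF G_orth_set[OF gs(1)[OF that(1)]] orth_imprimitivity_systemD(1,2)[OF DD that(2)]]
    by simp_all
  have inj: "inj_on (\<lambda>Y. gs Y ` A0) D"
  proof (rule inj_onI)
    fix Y Y' assume Y: "Y \<in> D" "Y' \<in> D" and eq: "gs Y ` A0 = gs Y' ` A0"
    show "Y = Y'"
      using invariant_decomp_eq_if_common_subspace[OF D Y block_image(1)[OF Y(1) A(1)]]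
        block_image[OF Y(2) A(1)] eq by simp
  qed
  have new: "gs X ` A1 \<notin> (\<lambda>Y. gs Y ` A0) ` D"
  proof
    assume "gs X ` A1 \<in> (\<lambda>Y. gs Y ` A0) ` D"
    then obtain Y where Y: "Y \<in> D" "gs X ` A1 = gs Y ` A0" by blast
    then have "X = Y"
      using invariant_decomp_eq_if_common_subspace[OF D X Y(1) block_image(1)[OF X A(2)]]
        block_image[OF Y(1) A(1)] by simp
    then have "gs X ` A1 = gs X ` A0" using Y(2) by simp
    moreover have "inj (gs X)" using orth_setD(2)[OF G_orth_set[OF gs(1)[OF X]]] by (simp add: bij_def)
    ultimately show False using A(3) by (simp add: inj_image_eq_iff)
  qed
  have "gs Y ` A0 \<in> translates DD" if "Y \<in> D" for Y
    unfolding translates_def using gs(1)[OF that] A(1) by blast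
  moreover have "gs X ` A1 \<in> translates DD" unfolding translates_def using gs(1)[OF X] A(2) by blast
  ultimately have "insert (gs X ` A1) ((\<lambda>Y. gs Y ` A0) ` D) \<subseteq> translates DD" by blast
  then have "card (insert (gs X ` A1) ((\<lambda>Y. gs Y ` A0) ` D)) \<le> card (translates DD)"
    using card_mono[OF invariant_decomp_finite(1)[OF invariant_decomp_translates[OF D X DD]]] by blast
  then show ?thesis
    using new card_image[OF inj] invariant_decomp_finite(1)[OF D] by simp
qed

lemma exists_invariant_decomp_lines: "\<exists>D. invariant_decomp D \<and> (\<forall>X\<in>D. vec.dim X = 1)"
proof -
  define M where "M = {card D | D. invariant_decomp D}"
  have "M \<subseteq> {..CARD('n)}" unfolding M_def using invariant_decomp_finite(2) by auto
  then have M: "finite M" using finite_subset by blast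
  have "card {UNIV :: ('a ^ 'n) set} \<in> M" unfolding M_def using invariant_decomp_UNIV by blast
  then have "Max M \<in> M" using Max_in[OF M] by blast
  then obtain D where D: "invariant_decomp D" "card D = Max M" unfolding M_def by auto
  have "vec.dim X = 1" if X: "X \<in> D" for X
  proof (rule ccontr)
    assume "vec.dim X \<noteq> 1"
    then obtain DD where DD: "orth_imprimitivity_system X (stabilizer X) DD"
      using stabilizer_imprimitive[OF D(1) X] by blast
    have "card (translates DD) \<in> M"
      unfolding M_def using invariant_decomp_translates[OF D(1) X DD] by blast
    then have "card (translates DD) \<le> card D" using Max_ge[OF M] D(2) by simp
    then show False using card_translates_gt[OF D(1) X DD] by simp
  qed
  then show ?thesis using D(1) by blast
qed

lemma exists_invariant_orthogonal_lines:
  "\<exists>W :: 'n \<Rightarrow> ('a ^ 'n) set.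
      (\<forall>i. vec.subspace (W i) \<and> vec.dim (W i) = 1)
    \<and> (\<forall>i j. i \<noteq> j \<longrightarrow> (\<forall>u\<in>W i. \<forall>v\<in>W j. polarization Q u v = 0))
    \<and> (\<forall>v. \<exists>!w. (\<forall>i. w i \<in> W i) \<and> v = (\<Sum>i\<in>UNIV. w i))
    \<and> (\<forall>g\<in>G. \<forall>i. \<exists>j. g ` W i = W j)"
proof -
  obtain D where D: "invariant_decomp D" and lines: "\<forall>X\<in>D. vec.dim X = 1"
    using exists_invariant_decomp_lines by blast
  obtain W where "bij_betw W (UNIV :: 'n set) D"
    using finite_same_card_bij[OF finite_class.finite_UNIV invariant_decomp_finite(1)[OF D]]
      card_invariant_decomp_lines[OF D] lines by fastforce
  then have WD: "W i \<in> D" and W_inj: "inj W" and W_onto: "range W = D" for i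
    unfolding bij_betw_def by auto
  have orth: "orthogonal_sets (W i) (W j)" if "i \<noteq> j" for i j
    using invariant_decompD(3)[OF D WD WD] W_inj that by (metis injD)
  have "\<exists>!w. (\<forall>i. w i \<in> W i) \<and> v = (\<Sum>i\<in>UNIV. w i)" for v
    using orthogonal_family_unique_sum[OF W_inj invariant_decompD(1)[OF D WD]
        invariant_decomp_nondegenerate[OF D WD] orth] invariant_decompD(4)[OF D] W_onto
    by simp
  moreover have "\<exists>j. g ` W i = W j" if "g \<in> G" for g i
    using invariant_decompD(5)[OF D that WD] W_onto by (metis rangeE)
  ultimately show ?thesis
    using invariant_decompD(1)[OF D WD] lines WD orth unfolding orthogonal_sets_def by blast
qed

end

theorem theorem1p1:
  fixes Q :: "'a::field ^ 'n \<Rightarrow> 'a"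
    and G :: "('a ^ 'n \<Rightarrow> 'a ^ 'n) set"
  assumes char: "(2::'a) \<noteq> 0"
    and odd_dim: "odd CARD('n)"
    and quad: "is_quadratic_form Q"
    and nondeg: "nondegenerate Q"
    and sub: "subgroup G (orth_group Q)"
    and fin: "finite G"
    and solv: "solvable ((orth_group Q)\<lparr>carrier := G\<rparr>)"
    and irr: "acts_irreducibly G"
  shows "\<exists>W :: 'n \<Rightarrow> ('a ^ 'n) set.
           (\<forall>i. vec.subspace (W i) \<and> vec.dim (W i) = 1)
         \<and> (\<forall>i j. i \<noteq> j \<longrightarrow> (\<forall>u\<in>W i. \<forall>v\<in>W j. polarization Q u v = 0))
         \<and> (\<forall>v. \<exists>!w. (\<forall>i. w i \<in> W i) \<and> v = (\<Sum>i\<in>UNIV. w i))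
         \<and> (\<forall>g\<in>G. \<forall>i. \<exists>j. g ` W i = W j)"
proof -
  interpret solvable_irreducible_isometry_group Q G
    using quad nondeg char sub fin solv irr odd_dim
    by (intro solvable_irreducible_isometry_group.intro quadratic_space.intro
        solvable_irreducible_isometry_group_axioms.intro)
  show ?thesis by (rule exists_invariant_orthogonal_lines)
qed

end
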